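(* Let $F$ be an admissible fundamental matrix on $J$ and $g\in Y$. Then for every $a\in J$, $\mathcal L_F^{-1}(a,g)\in C^2((-1,1)\setminus\{0\})\cap C^1(-1,1)$ and \[ \mathcal L_F(a,\mathcal L_F^{-1}(a,g))(y)=g(y) \] for all $(y,a)\in((-1,1)\setminus\{0\})\times J$.
   Context: Notation: $A^j{}_k$ is the entry in row $j$, column $k$; a prime denotes $\partial_y$; $\varphi(y,\alpha):=-\frac{2\alpha}{(1-y)^2}+\frac{2\alpha}{1-y}-\frac{2}{\alpha}\log(1-y)$; each occurrence of $\mathcal P(y)$ denotes some polynomial in $y$ with complex coefficients independent of $a$ (different occurrences may differ). Let $a_*\in\mathbb{R}\setminus\{0\}$, $J\subset\mathbb{R}\setminus\{-a_*\}$ compact. An admissible right fundamental matrix $F_R(y,a)$, $(y,a)\in[0,1)\times J$, is the real $4\times4$ matrix with $j$-th column $(\Re f_j,\Im f_j,\Re f_j',\Im f_j')^T(y,a)$, where $\det F_R\neq0$ on $[0,1)\times J$ and $f_1=1+\frac{a_*+a+i}{2(a_*+a)}(1-y)+(1-y)^2\mathcal P(y)$, $f_2=i+i\frac{a_*+a+i}{2(a_*+a)}(1-y)+(1-y)^2\mathcal P(y)$, $f_3=e^{i\varphi(y,a_*+a)}(1-y)[1+\frac{2(a_*+a)-i}{2(a_*+a)}(1-y)+(1-y)^2\mathcal P(y)]+e^{-i\varphi(y,a_*+a)}(1-y)^5\mathcal P(y)$, $f_4=ie^{i\varphi(y,a_*+a)}(1-y)[1+\frac{2(a_*+a)-i}{2(a_*+a)}(1-y)+(1-y)^2\mathcal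 P(y)]+ie^{-i\varphi(y,a_*+a)}(1-y)^5\mathcal P(y)$. An admissible left fundamental matrix $F_L(y)$, $y\in(-1,0]$, is the real $4\times4$ matrix with columns $(\Re g_j,\Im g_j,\Re g_j',\Im g_j')^T$, $\det F_L\neq0$ on $(-1,0]$, $g_1=1+(1+y)\mathcal P(y)$, $g_2=i+(1+y)\mathcal P(y)$, $g_3=\frac{1}{1+y}[1+(1+y)\mathcal P(y)]$, $g_4=\frac{i}{1+y}[1+(1+y)\mathcal P(y)]$. With $M_F(a):=F_L(0)^{-1}F_R(0,a)$, the admissible fundamental matrix on $J$ is $F(y,a):=F_L(y)M_F(a)$ for $y\in(-1,0]$, $F(y,a):=F_R(y,a)$ for $y\in(0,1)$, assuming $M_F(a)^3{}_1\neq0$ for all $a\in J$. Coefficients: on $((-1,1)\setminus\{0\})\times J$ let $A:=-\partial_yF\,F^{-1}$, $p_1=\frac12(A^3{}_3+A^4{}_4)+\frac i2(A^4{}_3-A^3{}_4)$, $p_2=\frac12(A^3{}_3-A^4{}_4)+\frac i2(A^4{}_3+A^3{}_4)$, $q_1=\frac12(A^3{}_1+A^4{}_2)+\frac i2(A^4{}_1-A^3{}_2)$, $q_2=\frac12(A^3{}_1-A^4{}_2)+\frac i2(A^4{}_1+A^3{}_2)$. For $f\in C^2$ on an open subset of $(-1,1)\setminus\{0\}$: $\mathcal L_F(a,f)(y):=f''(y)+p_1(y,a)f'(y)+p_2(y,a)\overline{f'(y)}+q_1(y,a)f(y)+q_2(y,a)\overline{f(y)}$. $Y$ is the space of $f\in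 C(-1,1)$ with $(1+y)(1-y)^2f(y)$ extending continuously to $[-1,1]$. For $g\in Y$: $\alpha_F^k(a,g)(y):=F^{-1}(y,a)^k{}_3\Re g(y)+F^{-1}(y,a)^k{}_4\Im g(y)$ ($F^{-1}(y,a)^k{}_\ell$ the $(k,\ell)$ entry of $F(y,a)^{-1}$), and \begin{align*} \mathcal L_F^{-1}(a,g)(y):=&\sum_{k=1}^2[F(y,a)^1{}_k+iF(y,a)^2{}_k]\int_{-1}^y\alpha_F^k(a,g)(x)dx-\sum_{k=3}^4[F(y,a)^1{}_k+iF(y,a)^2{}_k]\int_y^1\alpha_F^k(a,g)(x)dx\\ &+[F(y,a)^1{}_1+iF(y,a)^2{}_1]\sum_{k=3}^4\frac{M_F(a)^3{}_k}{M_F(a)^3{}_1}\int_{-1}^1\alpha_F^k(a,g)(x)dx. \end{align*} *)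

theory Defs
  imports "HOL-Analysis.Analysis" "HOL-Computational_Algebra.Polynomial"
begin

definition phi :: "real \<Rightarrow> real \<Rightarrow> real" where
  "phi y \<alpha> = - 2 * \<alpha> / (1 - y)^2 + 2 * \<alpha> / (1 - y) - 2 / \<alpha> * ln (1 - y)"

text \<open>The functions f_k (k = 1..4) of an admissible right fundamental matrix, with
  alpha = a_* + a. All polynomials are independent of a.\<close>
definition fR :: "(4 \<Rightarrow> complex poly) \<Rightarrow> (4 \<Rightarrow> complex poly) \<Rightarrow> real \<Rightarrow> 4 \<Rightarrow> real \<Rightarrow> complex" where
  "fR P Q \<alpha> k y =
    (let s = complex_of_real (1 - y);
         c = (complex_of_real \<alpha> + \<i>) / (2 * complex_of_real \<alpha>);
         d = (2 * complex_of_real \<alpha> - \<i>) / (2 * complex_of_real \<alpha>);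
         E = exp (\<i> * complex_of_real (phi y \<alpha>));
         E' = exp (- \<i> * complex_of_real (phi y \<alpha>));
         z = complex_of_real y
     in if k = 1 then 1 + c * s + s^2 * poly (P 1) z
        else if k = 2 then \<i> + \<i> * c * s + s^2 * poly (P 2) z
        else if k = 3 then E * s * (1 + d * s + s^2 * poly (P 3) z) + E' * s^5 * poly (Q 3) z
        else \<i> * E * s * (1 + d * s + s^2 * poly (P 4) z) + \<i> * E' * s^5 * poly (Q 4) z)"

definition gL :: "(4 \<Rightarrow> complex poly) \<Rightarrow> 4 \<Rightarrow> real \<Rightarrow> complex" where
  "gL P k y =
    (let t = complex_of_real (1 + y); z = complex_of_real y
     in if k = 1 then 1 + t * poly (P 1) z
        else if k = 2 then \<i> + t * poly (P 2) z
        else if k = 3 then 1 / t * (1 + t * poly (P 3) z)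
        else \<i> / t * (1 + t * poly (P 4) z))"

definition colvec :: "(real \<Rightarrow> complex) \<Rightarrow> real \<Rightarrow> real^4" where
  "colvec f y = (\<chi> j. if j = 1 then Re (f y) else if j = 2 then Im (f y)
                     else if j = 3 then Re (vector_derivative f (at y))
                     else Im (vector_derivative f (at y)))"

definition FR :: "(4 \<Rightarrow> complex poly) \<Rightarrow> (4 \<Rightarrow> complex poly) \<Rightarrow> real \<Rightarrow> real \<Rightarrow> real \<Rightarrow> real^4^4" where
  "FR P Q astar y a = (\<chi> j k. colvec (fR P Q (astar + a) k) y $ j)"

definition FL :: "(4 \<Rightarrow> complex poly) \<Rightarrow> real \<Rightarrow> real^4^4" where
  "FL PL y = (\<chi> j k. colvec (gL PL k) y $ j)"

definition MF :: "(4 \<Rightarrow> complex poly) \<Rightarrow> (4 \<Rightarrow> complex poly) \<Rightarrow> (4 \<Rightarrow> complex poly) \<Rightarrow> real \<Rightarrow> real \<Rightarrow> real^4^4" where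
  "MF PL P Q astar a = matrix_inv (FL PL 0) ** FR P Q astar 0 a"

definition Ffund :: "(4 \<Rightarrow> complex poly) \<Rightarrow> (4 \<Rightarrow> complex poly) \<Rightarrow> (4 \<Rightarrow> complex poly) \<Rightarrow> real \<Rightarrow> real \<Rightarrow> real \<Rightarrow> real^4^4" where
  "Ffund PL P Q astar y a = (if y \<le> 0 then FL PL y ** MF PL P Q astar a else FR P Q astar y a)"

definition admissible_F :: "real \<Rightarrow> real set \<Rightarrow> (4 \<Rightarrow> complex poly) \<Rightarrow> (4 \<Rightarrow> complex poly) \<Rightarrow> (4 \<Rightarrow> complex poly) \<Rightarrow> bool" where
  "admissible_F astar J PL P Q \<longleftrightarrow>
     astar \<noteq> 0 \<and> compact J \<and> - astar \<notin> J \<and>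
     (\<forall>y\<in>{0..<1}. \<forall>a\<in>J. det (FR P Q astar y a) \<noteq> 0) \<and>
     (\<forall>y\<in>{-1<..0}. det (FL PL y) \<noteq> 0) \<and>
     (\<forall>a\<in>J. MF PL P Q astar a $ 3 $ 1 \<noteq> 0)"

definition coefA :: "(real \<Rightarrow> real^4^4) \<Rightarrow> real \<Rightarrow> real^4^4" where
  "coefA F y = - ((\<chi> j k. vector_derivative (\<lambda>t. F t $ j $ k) (at y)) ** matrix_inv (F y))"

definition p1 :: "(real \<Rightarrow> real^4^4) \<Rightarrow> real \<Rightarrow> complex" where
  "p1 F y = (let A = coefA F y in
     complex_of_real ((A$3$3 + A$4$4) / 2) + \<i> * complex_of_real ((A$4$3 - A$3$4) / 2))"

definition p2 :: "(real \<Rightarrow> real^4^4) \<Rightarrow> real \<Rightarrow> complex" where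
  "p2 F y = (let A = coefA F y in
     complex_of_real ((A$3$3 - A$4$4) / 2) + \<i> * complex_of_real ((A$4$3 + A$3$4) / 2))"

definition q1 :: "(real \<Rightarrow> real^4^4) \<Rightarrow> real \<Rightarrow> complex" where
  "q1 F y = (let A = coefA F y in
     complex_of_real ((A$3$1 + A$4$2) / 2) + \<i> * complex_of_real ((A$4$1 - A$3$2) / 2))"

definition q2 :: "(real \<Rightarrow> real^4^4) \<Rightarrow> real \<Rightarrow> complex" where
  "q2 F y = (let A = coefA F y in
     complex_of_real ((A$3$1 - A$4$2) / 2) + \<i> * complex_of_real ((A$4$1 + A$3$2) / 2))"

definition LF :: "(real \<Rightarrow> real^4^4) \<Rightarrow> (real \<Rightarrow> complex) \<Rightarrow> real \<Rightarrow> complex" where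
  "LF F f y =
     vector_derivative (\<lambda>t. vector_derivative f (at t)) (at y)
     + p1 F y * vector_derivative f (at y) + p2 F y * cnj (vector_derivative f (at y))
     + q1 F y * f y + q2 F y * cnj (f y)"

definition Yspace :: "(real \<Rightarrow> complex) set" where
  "Yspace = {f. continuous_on {-1<..<1} f \<and>
     (\<exists>h. continuous_on {-1..1} h \<and>
          (\<forall>y\<in>{-1<..<1}. h y = complex_of_real ((1 + y) * (1 - y)^2) * f y))}"

definition alphaF :: "(real \<Rightarrow> real^4^4) \<Rightarrow> (real \<Rightarrow> complex) \<Rightarrow> 4 \<Rightarrow> real \<Rightarrow> real" where
  "alphaF F g k x = matrix_inv (F x) $ k $ 3 * Re (g x) + matrix_inv (F x) $ k $ 4 * Im (g x)"

text \<open>L_F^{-1}(a,g); F is y \<mapsto> F(y,a), M is M_F(a). Integrals are Henstock-Kurzweil integrals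
  (which include the improper Riemann and the Lebesgue integrals).\<close>
definition LFinv :: "(real \<Rightarrow> real^4^4) \<Rightarrow> real^4^4 \<Rightarrow> (real \<Rightarrow> complex) \<Rightarrow> real \<Rightarrow> complex" where
  "LFinv F M g y =
     (let Fc = (\<lambda>k. complex_of_real (F y $ 1 $ k) + \<i> * complex_of_real (F y $ 2 $ k)) in
       (\<Sum>k\<in>{1,2}. Fc k * complex_of_real (integral {-1..y} (alphaF F g k)))
     - (\<Sum>k\<in>{3,4}. Fc k * complex_of_real (integral {y..1} (alphaF F g k)))
     + Fc 1 * (\<Sum>k\<in>{3,4}. complex_of_real (M $ 3 $ k / M $ 3 $ 1) *
                             complex_of_real (integral {-1..1} (alphaF F g k))))"

definition C2_on :: "(real \<Rightarrow> complex) \<Rightarrow> real set \<Rightarrow> bool" where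
  "C2_on f S \<longleftrightarrow> f C1_differentiable_on S \<and>
     (\<lambda>t. vector_derivative f (at t)) C1_differentiable_on S"

end

theory Submission
  imports Defs "HOL-Complex_Analysis.Cauchy_Integral_Formula"
begin

text \<open>
  On each side of \<open>0\<close> the columns of \<open>F\<close> are real and imaginary parts of holomorphic functions
  \<open>u\<^sub>k\<close> (the \<open>g\<^sub>k\<close> combined by \<open>M\<^sub>F\<close>, resp. the \<open>f\<^sub>k\<close>) that agree to first order at \<open>0\<close>.
  \<open>L\<^sub>F\<^sup>-\<^sup>1(a, g)\<close> is the variation of constants formula \<open>\<Sum>\<^sub>k u\<^sub>k c\<^sub>k\<close> with \<open>c\<^sub>k' = alphaF F g k\<close>:
  \<open>F F\<^sup>-\<^sup>1 = 1\<close> gives \<open>\<Sum>\<^sub>k u\<^sub>k c\<^sub>k' = 0\<close> and \<open>\<Sum>\<^sub>k u\<^sub>k' c\<^sub>k' = g\<close>, and by the definition of \<open>A\<close> every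
  \<open>u\<^sub>k\<close> solves \<open>L\<^sub>F u = 0\<close>, so \<open>L\<^sub>F (\<Sum>\<^sub>k u\<^sub>k c\<^sub>k) = g\<close>.

  What remains is the convergence of the improper integrals of \<open>alphaF F g k\<close> at \<open>\<plusminus>1\<close>.
  Since \<open>(1 + y) (1 - y)\<^sup>2 g\<close> is bounded, it suffices that the entries of \<open>F\<^sup>-\<^sup>1\<close> in columns 3, 4 are
  \<open>O(1 + y)\<close> at \<open>-1\<close> (for all rows) and \<open>O((1 - y)\<^sup>2)\<close> at \<open>1\<close> (for rows 3, 4). Both follow from
  \<open>F\<^sup>-\<^sup>1 = Q X\<^sup>-\<^sup>1 P\<close> for a rescaled matrix \<open>X = P F Q\<close> with invertible limit: at \<open>-1\<close> the scaling by \<open>1 + y\<close>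
  compensates the pole of \<open>g\<^sub>3, g\<^sub>4\<close>; at \<open>1\<close> the scaling by powers of \<open>1 - y\<close> is combined with the
  unimodular factor \<open>e\<^sup>-\<^sup>i\<^sup>\<phi>\<close> that removes the oscillation of \<open>f\<^sub>3, f\<^sub>4\<close>.
\<close>

lemma matrix_inv_right:
  fixes A :: "real^'n^'n"
  assumes "det A \<noteq> 0"
  shows "A ** matrix_inv A = mat 1"
proof -
  obtain B where "A ** B = mat 1 \<and> B ** A = mat 1"
    using assms by (auto simp: invertible_det_nz[symmetric] invertible_def)
  hence "A ** matrix_inv A = mat 1 \<and> matrix_inv A ** A = mat 1"
    unfolding matrix_inv_def by (rule someI)
  thus ?thesis ..
qed

lemma matrix_inv_left:
  fixes A :: "real^'n^'n"
  assumes "det A \<noteq> 0"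
  shows "matrix_inv A ** A = mat 1"
  using assms matrix_inv_right matrix_left_right_inverse by blast

lemma det_nonzero_if_right_inverse:
  fixes A B :: "real^'n^'n"
  assumes "A ** B = mat 1"
  shows "det A \<noteq> 0"
  using det_mul[of A B] assms by auto

lemma matrix_inv_unique:
  fixes A B :: "real^'n^'n"
  assumes "A ** B = mat 1"
  shows "matrix_inv A = B"
proof -
  have "B ** A = mat 1" using assms matrix_left_right_inverse by blast
  hence "matrix_inv A = B ** (A ** matrix_inv A)"
    by (simp add: matrix_mul_assoc)
  thus ?thesis
    by (simp add: matrix_inv_right[OF det_nonzero_if_right_inverse[OF assms]])
qed

lemma matrix_inv_factor:
  fixes A C P Q :: "real^'n^'n"
  assumes C: "C = P ** A ** Q" and "det C \<noteq> 0"
  shows "matrix_inv A = Q ** matrix_inv C ** P"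
proof -
  have "P ** (A ** Q ** matrix_inv C) = mat 1"
    using matrix_inv_right[OF assms(2)] unfolding C by (simp add: matrix_mul_assoc)
  hence "A ** (Q ** matrix_inv C ** P) = mat 1"
    using matrix_left_right_inverse by (metis matrix_mul_assoc)
  thus ?thesis by (rule matrix_inv_unique)
qed

lemma matrix_inv_entry_cramer:
  fixes A :: "real^'n^'n"
  assumes "det A \<noteq> 0"
  shows "matrix_inv A $ k $ j = det (\<chi> i l. if l = k then (if i = j then 1 else 0) else A$i$l) / det A"
proof -
  let ?x = "matrix_inv A *v axis j 1"
  have "A *v ?x = axis j 1"
    by (simp add: matrix_vector_mul_assoc matrix_inv_right[OF assms])
  hence "?x $ k = det (\<chi> i l. if l = k then axis j 1 $ i else A$i$l) / det A"
    using cramer[OF assms] by simp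
  moreover have "?x $ k = matrix_inv A $ k $ j"
    by (simp add: matrix_vector_mult_def axis_def if_distrib cong: if_cong)
  moreover have "(\<chi> i l. if l = k then axis j 1 $ i else A$i$l)
      = (\<chi> i l. if l = k then (if i = j then 1 else 0) else A$i$l)"
    by (simp add: axis_def vec_eq_iff)
  ultimately show ?thesis by simp
qed

lemma continuous_on_det:
  fixes M :: "'a::topological_space \<Rightarrow> real^'n^'n"
  assumes "\<And>i j. continuous_on S (\<lambda>x. M x $ i $ j)"
  shows "continuous_on S (\<lambda>x. det (M x))"
  unfolding det_def by (intro continuous_intros assms)

lemma tendsto_det:
  fixes M :: "'a \<Rightarrow> real^'n^'n"
  assumes "\<And>i j. ((\<lambda>x. M x $ i $ j) \<longlongrightarrow> L $ i $ j) F"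
  shows "((\<lambda>x. det (M x)) \<longlongrightarrow> det L) F"
  unfolding det_def by (intro tendsto_intros assms)

lemma continuous_on_matrix_inv:
  fixes M :: "'a::topological_space \<Rightarrow> real^'n^'n"
  assumes "\<And>i j. continuous_on S (\<lambda>x. M x $ i $ j)" and "\<And>x. x \<in> S \<Longrightarrow> det (M x) \<noteq> 0"
  shows "continuous_on S (\<lambda>x. matrix_inv (M x) $ k $ j)"
proof -
  have "continuous_on S (\<lambda>x. (\<chi> i l. if l = k then (if i = j then 1 else 0) else M x$i$l) $ i' $ l')"
    for i' l' by (cases "l' = k") (auto intro: assms)
  hence "continuous_on S (\<lambda>x. det (\<chi> i l. if l = k then (if i = j then 1 else 0) else M x$i$l) / det (M x))"
    using assms by (intro continuous_on_divide continuous_on_det) auto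
  thus ?thesis
    by (rule continuous_on_cong[THEN iffD1, rotated 2]) (auto simp: matrix_inv_entry_cramer assms)
qed

lemma tendsto_matrix_inv:
  fixes M :: "'a \<Rightarrow> real^'n^'n"
  assumes "\<And>i j. ((\<lambda>x. M x $ i $ j) \<longlongrightarrow> L $ i $ j) F" and "det L \<noteq> 0"
  shows "((\<lambda>x. matrix_inv (M x) $ k $ j) \<longlongrightarrow> matrix_inv L $ k $ j) F"
proof -
  have det: "((\<lambda>x. det (M x)) \<longlongrightarrow> det L) F" by (rule tendsto_det[OF assms(1)])
  have "((\<lambda>x. det (\<chi> i l. if l = k then (if i = j then 1 else 0) else M x$i$l) / det (M x)) \<longlongrightarrow>
        det (\<chi> i l. if l = k then (if i = j then 1 else 0) else L$i$l) / det L) F"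
    using assms by (intro tendsto_divide tendsto_det det) (auto simp: if_distrib)
  moreover have "eventually (\<lambda>x. det (M x) \<noteq> 0) F"
    using det assms(2) by (rule tendsto_imp_eventually_ne)
  ultimately show ?thesis
    by (simp add: matrix_inv_entry_cramer assms(2) tendsto_cong[THEN iffD1, rotated] eventually_mono)
qed

lemma eventually_bounded_matrix_inv:
  fixes M :: "'a \<Rightarrow> real^'n^'n"
  assumes "\<And>i j. ((\<lambda>x. M x $ i $ j) \<longlongrightarrow> L $ i $ j) F" and "det L \<noteq> 0"
  shows "\<exists>B. eventually (\<lambda>x. det (M x) \<noteq> 0 \<and> (\<forall>k j. \<bar>matrix_inv (M x) $ k $ j\<bar> \<le> B)) F"
proof -
  have "((\<lambda>x. matrix_inv (M x)) \<longlongrightarrow> matrix_inv L) F"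
    by (intro vec_tendstoI tendsto_matrix_inv assms)
  hence "eventually (\<lambda>x. norm (matrix_inv (M x)) < norm (matrix_inv L) + 1) F"
    by (rule order_tendstoD(2)[OF tendsto_norm]) auto
  moreover have "eventually (\<lambda>x. det (M x) \<noteq> 0) F"
    using tendsto_det[OF assms(1)] assms(2) by (rule tendsto_imp_eventually_ne)
  ultimately have "eventually (\<lambda>x. det (M x) \<noteq> 0 \<and>
      (\<forall>k j. \<bar>matrix_inv (M x) $ k $ j\<bar> \<le> norm (matrix_inv L) + 1)) F"
  proof eventually_elim
    case (elim x)
    have "\<bar>matrix_inv (M x) $ k $ j\<bar> \<le> norm (matrix_inv (M x))" for k j
      using component_le_norm_cart[of "matrix_inv (M x) $ k" j]
            Finite_Cartesian_Product.norm_nth_le[of "matrix_inv (M x)" k] by linarith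
    thus ?case using elim by (meson less_imp_le order_trans)
  qed
  thus ?thesis by blast
qed

definition diag_matrix :: "('n \<Rightarrow> real) \<Rightarrow> real^'n^'n" where
  "diag_matrix d = (\<chi> i j. if i = j then d i else 0)"

lemma matrix_mult_diag_entry: "(A ** diag_matrix d) $ i $ j = A $ i $ j * d j"
  by (simp add: matrix_matrix_mult_def diag_matrix_def if_distrib sum.If_cases cong: if_cong)

lemma diag_mult_matrix_entry: "(diag_matrix d ** A) $ i $ j = d i * A $ i $ j"
  by (simp add: matrix_matrix_mult_def diag_matrix_def if_distrib[where f = "\<lambda>x. x * _"] cong: if_cong)

lemma abs_matrix_mult_diag_entry_le:
  fixes Q C :: "real^'n^'n"
  assumes "\<And>m. \<bar>C $ m $ j\<bar> \<le> B"
  shows "\<bar>(Q ** C ** diag_matrix d) $ k $ j\<bar> \<le> (\<Sum>m\<in>UNIV. \<bar>Q $ k $ m\<bar>) * B * \<bar>d j\<bar>"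
proof -
  have "(Q ** C ** diag_matrix d) $ k $ j = (\<Sum>m\<in>UNIV. Q $ k $ m * C $ m $ j) * d j"
    by (simp only: matrix_mult_diag_entry) (simp add: matrix_matrix_mult_def)
  also have "\<bar>\<dots>\<bar> \<le> (\<Sum>m\<in>UNIV. \<bar>Q $ k $ m\<bar> * B) * \<bar>d j\<bar>"
    unfolding abs_mult
    by (intro mult_right_mono order_trans[OF sum_abs] sum_mono)
       (auto simp: abs_mult assms mult_left_mono)
  finally show ?thesis by (simp add: sum_distrib_right)
qed

lemma matrix_mult_entry_4:
  "((A::real^4^4) ** B) $ i $ j = A$i$1 * B$1$j + A$i$2 * B$2$j + A$i$3 * B$3$j + A$i$4 * B$4$j"
  by (simp add: matrix_matrix_mult_def sum_4)

lemma has_real_derivative_integral_upper: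
  fixes f :: "real \<Rightarrow> real"
  assumes "continuous_on {a<..<b} f" and "\<And>t. t \<in> {a<..<b} \<Longrightarrow> f integrable_on {a..t}"
    and y: "y \<in> {a<..<b}"
  shows "((\<lambda>t. integral {a..t} f) has_real_derivative f y) (at y)"
proof -
  define c where "c = (y + b) / 2"
  have c: "a < y" "y < c" "c < b" using y by (auto simp: c_def)
  have "continuous (at y within {a..c} - {}) f"
    using assms(1) c continuous_on_interior[of "{a<..<b}" f y] continuous_at_imp_continuous_within
    by auto
  hence "((\<lambda>t. integral {a..t} f) has_vector_derivative f y) (at y within {a..c} - {})"
    using c assms(2)[of c] by (intro integral_has_vector_derivative_continuous_at) auto
  thus ?thesis
    using at_within_interior[of y "{a..c}"] c
    by (simp add: has_real_derivative_iff_has_vector_derivative)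
qed

lemma has_real_derivative_integral_lower:
  fixes f :: "real \<Rightarrow> real"
  assumes "continuous_on {a<..<b} f" and "\<And>t. t \<in> {a<..<b} \<Longrightarrow> f integrable_on {t..b}"
    and y: "y \<in> {a<..<b}"
  shows "((\<lambda>t. integral {t..b} f) has_real_derivative - f y) (at y)"
proof -
  define c where "c = (a + y) / 2"
  have c: "a < c" "c < y" "y < b" using y by (auto simp: c_def)
  have int: "f integrable_on {c..b}" using assms(2) c by simp
  have "((\<lambda>t. integral {c..t} f) has_real_derivative f y) (at y)"
    using assms(1) c int
    by (intro has_real_derivative_integral_upper[where b = b])
       (auto elim: continuous_on_subset intro: integrable_subinterval_real)
  hence "((\<lambda>t. integral {c..b} f - integral {c..t} f) has_real_derivative - f y) (at y)"
    by (auto intro!: derivative_eq_intros)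
  thus ?thesis
  proof (rule has_field_derivative_transform_within_open[where S = "{c<..<b}"])
    fix t assume "t \<in> {c<..<b}"
    thus "integral {c..b} f - integral {c..t} f = integral {t..b} f"
      using Henstock_Kurzweil_Integration.integral_combine[of c t b f] int by auto
  qed (use c in auto)
qed

lemma integrable_on_Icc_if_bounded_continuous:
  fixes f :: "real \<Rightarrow> real"
  assumes "continuous_on {a<..<b} f" and "\<And>x. x \<in> {a<..<b} \<Longrightarrow> \<bar>f x\<bar> \<le> B"
  shows "f integrable_on {a..b}"
proof -
  have "(\<lambda>x. B) integrable_on {a<..<b}"
    using integrable_const_ivl[of B a b] by (simp add: integrable_on_Icc_iff_Ioo)
  hence "f integrable_on {a<..<b}"
    using assms
    by (intro measurable_bounded_by_integrable_imp_integrable[OF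
          continuous_imp_measurable_on_sets_lebesgue[OF assms(1)]]) auto
  thus ?thesis by (simp add: integrable_on_Icc_iff_Ioo)
qed

lemma integrable_on_Icc_if_bounded_at_left_end:
  fixes f :: "real \<Rightarrow> real"
  assumes f: "continuous_on {a<..<b} f" and bdd: "eventually (\<lambda>x. \<bar>f x\<bar> \<le> B) (at_right a)"
    and y: "y \<in> {a<..<b}"
  shows "f integrable_on {a..y}"
proof -
  obtain c where c: "c > a" "\<And>x. a < x \<Longrightarrow> x < c \<Longrightarrow> \<bar>f x\<bar> \<le> B"
    using bdd by (auto simp: eventually_at_right_field)
  define c' where "c' = min c y"
  have c': "a < c'" "c' \<le> y" "c' \<le> c" using c y by (auto simp: c'_def)
  have "f integrable_on {a..c'}"
    by (rule integrable_on_Icc_if_bounded_continuous[where B = B], rule continuous_on_subset[OF f])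
       (use c c' y in auto)
  moreover have "f integrable_on {c'..y}"
    by (rule integrable_continuous_interval, rule continuous_on_subset[OF f]) (use c' y in auto)
  ultimately show ?thesis
    by (intro Henstock_Kurzweil_Integration.integrable_combine[of a c' y]) (use c' in auto)
qed

lemma integrable_on_Icc_if_bounded_at_right_end:
  fixes f :: "real \<Rightarrow> real"
  assumes f: "continuous_on {a<..<b} f" and bdd: "eventually (\<lambda>x. \<bar>f x\<bar> \<le> B) (at_left b)"
    and y: "y \<in> {a<..<b}"
  shows "f integrable_on {y..b}"
proof -
  obtain c where c: "c < b" "\<And>x. c < x \<Longrightarrow> x < b \<Longrightarrow> \<bar>f x\<bar> \<le> B"
    using bdd by (auto simp: eventually_at_left_field)
  define c' where "c' = max c y"
  have c': "c' < b" "y \<le> c'" "c \<le> c'" using c y by (auto simp: c'_def)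
  have "f integrable_on {c'..b}"
    by (rule integrable_on_Icc_if_bounded_continuous[where B = B], rule continuous_on_subset[OF f])
       (use c c' y in auto)
  moreover have "f integrable_on {y..c'}"
    by (rule integrable_continuous_interval, rule continuous_on_subset[OF f]) (use c' y in auto)
  ultimately show ?thesis
    by (intro Henstock_Kurzweil_Integration.integrable_combine[of y c' b]) (use c' in auto)
qed

lemma tendsto_within_if_continuous_on_UNIV:
  "continuous_on UNIV f \<Longrightarrow> f x = c \<Longrightarrow> (f \<longlongrightarrow> c) (at x within S)"
  unfolding continuous_on_def by (auto intro: tendsto_within_subset)

lemma tendsto_mult_bounded_null:
  fixes e Y :: "'a \<Rightarrow> 'b::real_normed_div_algebra"
  assumes "(Y \<longlongrightarrow> 0) F" and "eventually (\<lambda>x. norm (e x) \<le> 1) F"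
  shows "((\<lambda>x. e x * Y x) \<longlongrightarrow> 0) F"
proof (rule Lim_null_comparison)
  show "eventually (\<lambda>x. norm (e x * Y x) \<le> norm (Y x)) F"
    using assms(2) by eventually_elim (simp add: norm_mult mult_left_le_one_le)
  show "((\<lambda>x. norm (Y x)) \<longlongrightarrow> 0) F" using assms(1) by (rule tendsto_norm_zero)
qed

lemma tendsto_principal_plus_bounded_null:
  fixes f X Y1 Y2 Y3 e1 e2 e3 :: "'a \<Rightarrow> 'b::real_normed_field"
  assumes "(X \<longlongrightarrow> L) F" and "(Y1 \<longlongrightarrow> 0) F" "(Y2 \<longlongrightarrow> 0) F" "(Y3 \<longlongrightarrow> 0) F"
    and "eventually (\<lambda>x. norm (e1 x) \<le> 1) F" "eventually (\<lambda>x. norm (e2 x) \<le> 1) F"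
      "eventually (\<lambda>x. norm (e3 x) \<le> 1) F"
    and "eventually (\<lambda>x. k * X x + e1 x * Y1 x + e2 x * Y2 x + e3 x * Y3 x = f x) F"
  shows "(f \<longlongrightarrow> k * L) F"
proof -
  have "((\<lambda>x. k * X x + e1 x * Y1 x + e2 x * Y2 x + e3 x * Y3 x) \<longlongrightarrow> k * L + 0 + 0 + 0) F"
    by (intro tendsto_add tendsto_mult_left assms(1) tendsto_mult_bounded_null assms(2-7))
  thus ?thesis using assms(8) by (auto intro: Lim_transform_eventually)
qed

lemma has_vector_derivative_holomorphic_of_real:
  assumes "G holomorphic_on S" "open S" "complex_of_real y \<in> S"
    and "open T" "y \<in> T" "\<And>t. t \<in> T \<Longrightarrow> f t = G (of_real t)"
  shows "(f has_vector_derivative deriv G (of_real y)) (at y)"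
proof -
  have "((\<lambda>t. G (of_real t)) has_vector_derivative deriv G (of_real y)) (at y)"
    by (rule has_vector_derivative_real_field[OF holomorphic_derivI[OF assms(1-3)]])
  thus ?thesis
    by (rule has_vector_derivative_transform_within_open[OF _ assms(4,5)]) (use assms(6) in auto)
qed

lemma continuous_on_holomorphic_of_real:
  "G holomorphic_on S \<Longrightarrow> (\<And>y. y \<in> T \<Longrightarrow> complex_of_real y \<in> S) \<Longrightarrow>
   continuous_on T (\<lambda>y. G (of_real y))"
  by (rule continuous_on_compose2[of S G T of_real])
     (auto intro: holomorphic_on_imp_continuous_on continuous_intros)

lemma has_vector_derivative_glue:
  fixes f g :: "real \<Rightarrow> 'a::real_normed_vector"
  assumes "(f has_vector_derivative D) (at 0)" "(g has_vector_derivative D) (at 0)" "f 0 = g 0"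
  shows "((\<lambda>t. if t \<le> 0 then f t else g t) has_vector_derivative D) (at 0)"
proof -
  let ?h = "\<lambda>t. if t \<le> 0 then f t else g t"
  have "(?h has_vector_derivative D) (at 0 within {..0})"
    by (rule has_vector_derivative_transform_within[OF has_vector_derivative_at_within[OF assms(1)], of 1])
       auto
  moreover have "(?h has_vector_derivative D) (at 0 within {0..})"
    by (rule has_vector_derivative_transform_within[OF has_vector_derivative_at_within[OF assms(2)], of 1])
       (use assms(3) in auto)
  ultimately have "(?h has_vector_derivative D) (at 0 within ({..0} \<union> {0..}))"
    unfolding has_vector_derivative_def has_derivative_within by (auto simp: Lim_within_Un)
  moreover have "{..0::real} \<union> {0..} = UNIV" by auto
  ultimately show ?thesis by simp
qed

section \<open>Variation of constants\<close>

text \<open>The coefficients of \<open>LFinv F M g = \<Sum>\<^sub>k u\<^sub>k c\<^sub>k\<close> (lemma \<open>LFinv_eq_sum\<close>); the \<open>M\<close>-dependent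
  constant of \<open>LFinv\<close> is absorbed into \<open>c\<^sub>1\<close>.\<close>

definition LFinv_coeff :: "(real \<Rightarrow> real^4^4) \<Rightarrow> real^4^4 \<Rightarrow> (real \<Rightarrow> complex) \<Rightarrow> 4 \<Rightarrow> real \<Rightarrow> real" where
  "LFinv_coeff F M g k y =
     (if k = 1 \<or> k = 2 then integral {-1..y} (alphaF F g k) else - integral {y..1} (alphaF F g k))
     + (if k = 1 then (\<Sum>j\<in>{3,4}. M$3$j / M$3$1 * integral {-1..1} (alphaF F g j)) else 0)"

locale fundamental_system =
  fixes F :: "real \<Rightarrow> real^4^4" and u v w :: "4 \<Rightarrow> real \<Rightarrow> complex"
  assumes det_nonzero: "\<And>y. y \<in> {-1<..<1} \<Longrightarrow> det (F y) \<noteq> 0"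
    and columns: "\<And>y k. y \<in> {-1<..<1} \<Longrightarrow>
      F y $1$k = Re (u k y) \<and> F y $2$k = Im (u k y) \<and> F y $3$k = Re (v k y) \<and> F y $4$k = Im (v k y)"
    and has_derivative_u: "\<And>y k. y \<in> {-1<..<1} \<Longrightarrow> (u k has_vector_derivative v k y) (at y)"
    and has_derivative_v: "\<And>y k. y \<in> {-1<..<1} - {0} \<Longrightarrow> (v k has_vector_derivative w k y) (at y)"
    and continuous_v: "\<And>k. continuous_on {-1<..<1} (v k)"
    and continuous_w: "\<And>k. continuous_on ({-1<..<1} - {0}) (w k)"
begin

lemma entries:
  assumes "y \<in> {-1<..<1}"
  shows "F y $1$k = Re (u k y)" "F y $2$k = Im (u k y)" "F y $3$k = Re (v k y)" "F y $4$k = Im (v k y)"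
  using columns[OF assms] by auto

lemma continuous_u: "continuous_on {-1<..<1} (u k)"
  using has_derivative_u has_vector_derivative_continuous
  by (intro continuous_at_imp_continuous_on) blast

lemma continuous_entries: "continuous_on {-1<..<1} (\<lambda>y. F y $ i $ j)"
proof -
  have "i = 1 \<or> i = 2 \<or> i = 3 \<or> i = 4" by (rule exhaust_4)
  thus ?thesis
  proof (elim disjE)
    assume "i = 1" thus ?thesis
      by (intro continuous_on_eq[OF continuous_on_Re[OF continuous_u]]) (simp add: entries)
  next
    assume "i = 2" thus ?thesis
      by (intro continuous_on_eq[OF continuous_on_Im[OF continuous_u]]) (simp add: entries)
  next
    assume "i = 3" thus ?thesis
      by (intro continuous_on_eq[OF continuous_on_Re[OF continuous_v]]) (simp add: entries)
  next
    assume "i = 4" thus ?thesis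
      by (intro continuous_on_eq[OF continuous_on_Im[OF continuous_v]]) (simp add: entries)
  qed
qed

lemma continuous_alphaF:
  assumes "continuous_on {-1<..<1} g"
  shows "continuous_on {-1<..<1} (alphaF F g k)"
  unfolding alphaF_def
  by (intro continuous_intros continuous_on_matrix_inv continuous_entries det_nonzero assms)

lemma sum_entries_alphaF:
  assumes "y \<in> {-1<..<1}"
  shows "(\<Sum>k\<in>UNIV. F y $ i $ k * alphaF F g k y)
       = (if i = 3 then Re (g y) else if i = 4 then Im (g y) else 0)"
proof -
  define e :: "real^4" where "e = (\<chi> i. if i = 3 then Re (g y) else if i = 4 then Im (g y) else 0)"
  have "alphaF F g k y = (matrix_inv (F y) *v e) $ k" for k
    by (simp add: alphaF_def e_def matrix_vector_mult_def sum_4)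
  hence "(\<Sum>k\<in>UNIV. F y $ i $ k * alphaF F g k y) = (F y *v (matrix_inv (F y) *v e)) $ i"
    by (simp add: matrix_vector_mult_def)
  also have "\<dots> = e $ i"
    by (simp add: matrix_vector_mul_assoc matrix_inv_right[OF det_nonzero[OF assms]])
  finally show ?thesis by (simp add: e_def)
qed

text \<open>These are the two conditions of the method of variation of constants.\<close>

lemma variation_conditions:
  assumes "y \<in> {-1<..<1}"
  shows "(\<Sum>k\<in>UNIV. u k y * of_real (alphaF F g k y)) = 0"
    and "(\<Sum>k\<in>UNIV. v k y * of_real (alphaF F g k y)) = g y"
  using sum_entries_alphaF[OF assms, of 1 g] sum_entries_alphaF[OF assms, of 2 g]
    sum_entries_alphaF[OF assms, of 3 g] sum_entries_alphaF[OF assms, of 4 g]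
  by (simp_all add: complex_eq_iff Re_sum Im_sum entries[OF assms])

definition derivative_matrix :: "real \<Rightarrow> real^4^4" where
  "derivative_matrix y = (\<chi> j k. if j = 1 then Re (v k y) else if j = 2 then Im (v k y)
                                  else if j = 3 then Re (w k y) else Im (w k y))"

lemma vector_derivative_entries:
  assumes y: "y \<in> {-1<..<1} - {0}"
  shows "vector_derivative (\<lambda>t. F t $ j $ k) (at y) = derivative_matrix y $ j $ k"
proof -
  have "j = 1 \<or> j = 2 \<or> j = 3 \<or> j = 4" by (rule exhaust_4)
  moreover have "((\<lambda>t. Re (u k t)) has_vector_derivative Re (v k y)) (at y)"
    "((\<lambda>t. Im (u k t)) has_vector_derivative Im (v k y)) (at y)"
    "((\<lambda>t. Re (v k t)) has_vector_derivative Re (w k y)) (at y)"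
    "((\<lambda>t. Im (v k t)) has_vector_derivative Im (w k y)) (at y)"
    using y by (intro bounded_linear.has_vector_derivative[OF bounded_linear_Re]
        bounded_linear.has_vector_derivative[OF bounded_linear_Im]
        has_derivative_u has_derivative_v; auto)+
  ultimately have "((\<lambda>t. F t $ j $ k) has_vector_derivative derivative_matrix y $ j $ k) (at y)"
    using y
    by (auto simp: derivative_matrix_def entries
        elim!: has_vector_derivative_transform_within_open[where S = "{-1<..<1}"])
  thus ?thesis by (rule vector_derivative_at)
qed

text \<open>Rows 3 and 4 of \<open>F' = - coefA F ** F\<close>, which is the definition of \<open>coefA\<close> multiplied by \<open>F\<close>.\<close>

lemma column_solves_homogeneous:
  assumes y: "y \<in> {-1<..<1} - {0}"
  shows "w k y + p1 F y * v k y + p2 F y * cnj (v k y) + q1 F y * u k y + q2 F y * cnj (u k y) = 0"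
proof -
  define A where "A = coefA F y"
  have "coefA F y = - (derivative_matrix y ** matrix_inv (F y))"
    unfolding coefA_def using vector_derivative_entries[OF y] by (simp add: vec_eq_iff)
  hence "A ** F y = - ((derivative_matrix y ** matrix_inv (F y)) ** F y)"
    by (simp add: A_def vec_eq_iff matrix_matrix_mult_def sum_negf)
  also have "\<dots> = - derivative_matrix y"
    using y det_nonzero by (simp add: matrix_mul_assoc[symmetric] matrix_inv_left)
  finally have AF: "A ** F y = - derivative_matrix y" .
  have "Re (w k y) = - (A$3$1 * Re (u k y) + A$3$2 * Im (u k y) + A$3$3 * Re (v k y) + A$3$4 * Im (v k y))"
    and "Im (w k y) = - (A$4$1 * Re (u k y) + A$4$2 * Im (u k y) + A$4$3 * Re (v k y) + A$4$4 * Im (v k y))"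
    using y arg_cong[OF AF, of "\<lambda>X. X $ 3 $ k"] arg_cong[OF AF, of "\<lambda>X. X $ 4 $ k"]
    by (simp_all add: matrix_mult_entry_4 derivative_matrix_def entries)
  thus ?thesis
    by (simp add: complex_eq_iff p1_def p2_def q1_def q2_def Let_def A_def[symmetric])
       (simp add: field_simps)
qed

lemma LFinv_eq_sum:
  assumes "y \<in> {-1<..<1}"
  shows "LFinv F M g y = (\<Sum>k\<in>UNIV. u k y * of_real (LFinv_coeff F M g k y))"
proof -
  have "u k y = of_real (F y $ 1 $ k) + \<i> * of_real (F y $ 2 $ k)" for k
    by (simp add: complex_eq_iff entries[OF assms])
  thus ?thesis
    by (simp add: LFinv_def LFinv_coeff_def Let_def sum_4 algebra_simps add_divide_distrib)
qed

end

locale variation_of_constants = fundamental_system +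
  fixes g :: "real \<Rightarrow> complex" and M :: "real^4^4"
  assumes continuous_g: "continuous_on {-1<..<1} g"
    and integrable_left: "\<And>y k. y \<in> {-1<..<1} \<Longrightarrow> k \<in> {1, 2} \<Longrightarrow> alphaF F g k integrable_on {-1..y}"
    and integrable_right: "\<And>y k. y \<in> {-1<..<1} \<Longrightarrow> k \<in> {3, 4} \<Longrightarrow> alphaF F g k integrable_on {y..1}"
begin

abbreviation c :: "4 \<Rightarrow> real \<Rightarrow> real" where
  "c \<equiv> LFinv_coeff F M g"

lemmas continuous_alphaF_g = continuous_alphaF[OF continuous_g]

lemma has_derivative_coeff:
  assumes "y \<in> {-1<..<1}"
  shows "(c k has_real_derivative alphaF F g k y) (at y)"
proof -
  have "((\<lambda>t. if k = 1 \<or> k = 2 then integral {-1..t} (alphaF F g k) else - integral {t..1} (alphaF F g k))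
      has_real_derivative alphaF F g k y) (at y)"
  proof (cases "k = 1 \<or> k = 2")
    case True
    have "((\<lambda>t. integral {-1..t} (alphaF F g k)) has_real_derivative alphaF F g k y) (at y)"
      using assms True integrable_left
      by (intro has_real_derivative_integral_upper[where b = 1] continuous_alphaF_g) auto
    thus ?thesis using True by simp
  next
    case False
    hence "k \<in> {3, 4}" using exhaust_4[of k] by auto
    hence "((\<lambda>t. - integral {t..1} (alphaF F g k)) has_real_derivative - (- alphaF F g k y)) (at y)"
      using assms integrable_right
      by (intro DERIV_minus has_real_derivative_integral_lower[where a = "-1"] continuous_alphaF_g) auto
    thus ?thesis using False by simp
  qed
  thus ?thesis
    unfolding LFinv_coeff_def by (auto intro!: derivative_eq_intros)
qed

lemma continuous_coeff: "continuous_on {-1<..<1} (c k)"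
  using has_derivative_coeff DERIV_isCont by (intro continuous_at_imp_continuous_on) blast

text \<open>Differentiating \<open>\<Sum>\<^sub>k u\<^sub>k c\<^sub>k\<close> twice, the terms with \<open>c\<^sub>k' = alphaF F g k\<close> contribute
  \<open>0\<close> and \<open>g\<close> by the two variation conditions.\<close>

lemma has_derivative_LFinv:
  assumes y: "y \<in> {-1<..<1}"
  shows "(LFinv F M g has_vector_derivative (\<Sum>k\<in>UNIV. v k y * of_real (c k y))) (at y)"
proof -
  have "((\<lambda>t. \<Sum>k\<in>UNIV. u k t * of_real (c k t)) has_vector_derivative
      (\<Sum>k\<in>UNIV. u k y * of_real (alphaF F g k y) + v k y * of_real (c k y))) (at y)"
    using y by (intro derivative_intros has_derivative_u has_derivative_coeff
        has_vector_derivative_mult has_vector_derivative_of_real)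
  hence "((\<lambda>t. \<Sum>k\<in>UNIV. u k t * of_real (c k t)) has_vector_derivative
      (\<Sum>k\<in>UNIV. v k y * of_real (c k y))) (at y)"
    using variation_conditions(1)[OF y] by (simp add: sum.distrib)
  thus ?thesis
    by (rule has_vector_derivative_transform_within_open[where S = "{-1<..<1}"])
       (use y in \<open>auto simp: LFinv_eq_sum\<close>)
qed

lemma has_second_derivative_LFinv:
  assumes y: "y \<in> {-1<..<1} - {0}"
  shows "((\<lambda>t. vector_derivative (LFinv F M g) (at t)) has_vector_derivative
      (\<Sum>k\<in>UNIV. w k y * of_real (c k y)) + g y) (at y)"
proof -
  have "((\<lambda>t. \<Sum>k\<in>UNIV. v k t * of_real (c k t)) has_vector_derivative
      (\<Sum>k\<in>UNIV. v k y * of_real (alphaF F g k y) + w k y * of_real (c k y))) (at y)"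
    using y by (intro derivative_intros has_derivative_v has_derivative_coeff
        has_vector_derivative_mult has_vector_derivative_of_real) auto
  hence "((\<lambda>t. \<Sum>k\<in>UNIV. v k t * of_real (c k t)) has_vector_derivative
      (\<Sum>k\<in>UNIV. w k y * of_real (c k y)) + g y) (at y)"
    using variation_conditions(2)[of y] y by (simp add: sum.distrib algebra_simps)
  thus ?thesis
    by (rule has_vector_derivative_transform_within_open[where S = "{-1<..<1} - {0}"])
       (use y vector_derivative_at[OF has_derivative_LFinv] in auto)
qed

theorem LFinv_solves:
  "C2_on (LFinv F M g) ({-1<..<1} - {0}) \<and> LFinv F M g C1_differentiable_on {-1<..<1} \<and>
   (\<forall>y\<in>{-1<..<1} - {0}. LF F (LFinv F M g) y = g y)"
proof (intro conjI ballI)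
  have "continuous_on {-1<..<1} (\<lambda>y. \<Sum>k\<in>UNIV. v k y * of_real (c k y))"
    by (intro continuous_intros continuous_v continuous_coeff)
  thus C1: "LFinv F M g C1_differentiable_on {-1<..<1}"
    unfolding C1_differentiable_on_def
    by (intro exI[of _ "\<lambda>y. \<Sum>k\<in>UNIV. v k y * of_real (c k y)"] conjI ballI has_derivative_LFinv)
  have "continuous_on ({-1<..<1} - {0}) (\<lambda>y. (\<Sum>k\<in>UNIV. w k y * of_real (c k y)) + g y)"
    by (intro continuous_intros continuous_w continuous_on_subset[OF continuous_coeff]
        continuous_on_subset[OF continuous_g]) auto
  hence "(\<lambda>t. vector_derivative (LFinv F M g) (at t)) C1_differentiable_on ({-1<..<1} - {0})"
    unfolding C1_differentiable_on_def
    by (intro exI[of _ "\<lambda>y. (\<Sum>k\<in>UNIV. w k y * of_real (c k y)) + g y"] conjI ballI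
        has_second_derivative_LFinv)
  moreover have "LFinv F M g C1_differentiable_on ({-1<..<1} - {0})"
    by (rule C1_differentiable_on_subset[OF C1]) auto
  ultimately show "C2_on (LFinv F M g) ({-1<..<1} - {0})"
    unfolding C2_on_def by blast
next
  fix y :: real assume y: "y \<in> {-1<..<1} - {0}"
  have "LF F (LFinv F M g) y = (\<Sum>k\<in>UNIV. w k y * of_real (c k y)) + g y
      + p1 F y * (\<Sum>k\<in>UNIV. v k y * of_real (c k y)) + p2 F y * cnj (\<Sum>k\<in>UNIV. v k y * of_real (c k y))
      + q1 F y * (\<Sum>k\<in>UNIV. u k y * of_real (c k y)) + q2 F y * cnj (\<Sum>k\<in>UNIV. u k y * of_real (c k y))"
    using y vector_derivative_at[OF has_derivative_LFinv, of y]
      vector_derivative_at[OF has_second_derivative_LFinv[OF y]]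
    by (simp add: LF_def LFinv_eq_sum)
  also have "\<dots> = (\<Sum>k\<in>UNIV. of_real (c k y) *
      (w k y + p1 F y * v k y + p2 F y * cnj (v k y) + q1 F y * u k y + q2 F y * cnj (u k y))) + g y"
    by (simp add: sum_4 algebra_simps)
  also have "\<dots> = g y"
    using y by (simp add: column_solves_homogeneous)
  finally show "LF F (LFinv F M g) y = g y" .
qed

end

section \<open>The glued fundamental matrix\<close>

definition glue :: "(complex \<Rightarrow> complex) \<Rightarrow> (complex \<Rightarrow> complex) \<Rightarrow> real \<Rightarrow> complex" where
  "glue G H y = (if y \<le> 0 then G (of_real y) else H (of_real y))"

lemma has_vector_derivative_glue_holomorphic:
  assumes G: "G holomorphic_on {z. Re z > -1}" and H: "H holomorphic_on {z. Re z < 1}"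
    and y: "y \<in> {-1<..<1}" and at0: "y = 0 \<Longrightarrow> G 0 = H 0 \<and> deriv G 0 = deriv H 0"
  shows "(glue G H has_vector_derivative glue (deriv G) (deriv H) y) (at y)"
proof -
  have openG: "open {z::complex. Re z > -1}" by (simp add: open_halfspace_Re_gt)
  have openH: "open {z::complex. Re z < 1}" by (simp add: open_halfspace_Re_lt)
  consider "y < 0" | "y = 0" | "y > 0" by linarith
  thus ?thesis
  proof cases
    case 1
    thus ?thesis using y unfolding glue_def
      by (simp, intro has_vector_derivative_holomorphic_of_real[OF G openG, where T = "{-1<..<0}"]) auto
  next
    case 3
    thus ?thesis using y unfolding glue_def
      by (simp, intro has_vector_derivative_holomorphic_of_real[OF H openH, where T = "{0<..<1}"]) auto
  next
    case 2
    have "((\<lambda>t. G (of_real t)) has_vector_derivative deriv G 0) (at 0)"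
      using has_vector_derivative_holomorphic_of_real[OF G openG, of 0 UNIV] by simp
    moreover have "((\<lambda>t. H (of_real t)) has_vector_derivative deriv G 0) (at 0)"
      using has_vector_derivative_holomorphic_of_real[OF H openH, of 0 UNIV] at0 2 by simp
    ultimately have "((\<lambda>t. if t \<le> 0 then G (of_real t) else H (of_real t))
        has_vector_derivative deriv G 0) (at 0)"
      by (rule has_vector_derivative_glue) (use at0 2 in simp)
    thus ?thesis using 2 by (simp add: glue_def[abs_def])
  qed
qed

lemma continuous_on_glue_holomorphic:
  assumes G: "G holomorphic_on {z. Re z > -1}" and H: "H holomorphic_on {z. Re z < 1}"
    and S: "S \<subseteq> {-1<..<1}" and at0: "0 \<in> S \<Longrightarrow> G 0 = H 0"
  shows "continuous_on S (glue G H)"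
  unfolding glue_def[abs_def]
  by (rule continuous_on_cases_le[where h = "\<lambda>y. y"])
     (use S at0 in \<open>auto intro!: continuous_on_holomorphic_of_real[OF G] continuous_on_holomorphic_of_real[OF H]
        continuous_intros\<close>)

text \<open>The glued second derivatives may jump at \<open>0\<close>; this is why \<open>L\<^sub>F\<close> is only considered away from \<open>0\<close>.\<close>

lemma fundamental_system_glue:
  fixes G H :: "4 \<Rightarrow> complex \<Rightarrow> complex"
  assumes G: "\<And>k. G k holomorphic_on {z. Re z > -1}" and H: "\<And>k. H k holomorphic_on {z. Re z < 1}"
    and at0: "\<And>k. G k 0 = H k 0" "\<And>k. deriv (G k) 0 = deriv (H k) 0"
    and det: "\<And>y. y \<in> {-1<..<1} \<Longrightarrow> det (F y) \<noteq> 0"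
    and cols: "\<And>y k. y \<in> {-1<..<1} \<Longrightarrow>
      F y $1$k = Re (glue (G k) (H k) y) \<and> F y $2$k = Im (glue (G k) (H k) y) \<and>
      F y $3$k = Re (glue (deriv (G k)) (deriv (H k)) y) \<and> F y $4$k = Im (glue (deriv (G k)) (deriv (H k)) y)"
  shows "fundamental_system F (\<lambda>k. glue (G k) (H k)) (\<lambda>k. glue (deriv (G k)) (deriv (H k)))
    (\<lambda>k. glue (deriv (deriv (G k))) (deriv (deriv (H k))))"
proof
  have G': "deriv (G k) holomorphic_on {z. Re z > -1}" "deriv (deriv (G k)) holomorphic_on {z. Re z > -1}"
    and H': "deriv (H k) holomorphic_on {z. Re z < 1}" "deriv (deriv (H k)) holomorphic_on {z. Re z < 1}"
    for k by (intro holomorphic_deriv G H open_halfspace_Re_gt open_halfspace_Re_lt)+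
  fix y k
  show "y \<in> {-1<..<1} \<Longrightarrow> det (F y) \<noteq> 0" by (rule det)
  show "y \<in> {-1<..<1} \<Longrightarrow>
    F y $1$k = Re (glue (G k) (H k) y) \<and> F y $2$k = Im (glue (G k) (H k) y) \<and>
    F y $3$k = Re (glue (deriv (G k)) (deriv (H k)) y) \<and> F y $4$k = Im (glue (deriv (G k)) (deriv (H k)) y)"
    by (rule cols)
  show "y \<in> {-1<..<1} \<Longrightarrow> (glue (G k) (H k) has_vector_derivative glue (deriv (G k)) (deriv (H k)) y) (at y)"
    by (rule has_vector_derivative_glue_holomorphic[OF G H]) (use at0 in auto)
  show "y \<in> {-1<..<1} - {0} \<Longrightarrow> (glue (deriv (G k)) (deriv (H k)) has_vector_derivative
      glue (deriv (deriv (G k))) (deriv (deriv (H k))) y) (at y)"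
    by (rule has_vector_derivative_glue_holomorphic[OF G'(1) H'(1)]) auto
  show "continuous_on {-1<..<1} (glue (deriv (G k)) (deriv (H k)))"
    by (rule continuous_on_glue_holomorphic[OF G'(1) H'(1)]) (use at0 in auto)
  show "continuous_on ({-1<..<1} - {0}) (glue (deriv (deriv (G k))) (deriv (deriv (H k))))"
    by (rule continuous_on_glue_holomorphic[OF G'(2) H'(2)]) auto
qed

text \<open>Holomorphic extensions of \<open>\<phi>\<close> and the \<open>f\<^sub>k\<close> to \<open>Re z < 1\<close> (principal logarithm), and of the
  \<open>g\<^sub>k\<close> to \<open>Re z > -1\<close>; \<open>gLM_ext PL M k\<close> is the \<open>k\<close>-th column of \<open>F\<^sub>L M\<close>.\<close>

definition phi_ext :: "real \<Rightarrow> complex \<Rightarrow> complex" where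
  "phi_ext al z = - 2 * of_real al / (1 - z)^2 + 2 * of_real al / (1 - z) - 2 / of_real al * ln (1 - z)"

definition phi_ext' :: "real \<Rightarrow> complex \<Rightarrow> complex" where
  "phi_ext' al z = - 4 * of_real al / (1 - z)^3 + 2 * of_real al / (1 - z)^2 + 2 / (of_real al * (1 - z))"

definition osc_pos :: "real \<Rightarrow> complex \<Rightarrow> complex" where
  "osc_pos al z = exp (\<i> * phi_ext al z)"

definition osc_neg :: "real \<Rightarrow> complex \<Rightarrow> complex" where
  "osc_neg al z = exp (- \<i> * phi_ext al z)"

definition coeff_reg :: "real \<Rightarrow> complex" where
  "coeff_reg al = (of_real al + \<i>) / (2 * of_real al)"

definition coeff_osc :: "real \<Rightarrow> complex" where
  "coeff_osc al = (2 * of_real al - \<i>) / (2 * of_real al)"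

definition bracket :: "(4 \<Rightarrow> complex poly) \<Rightarrow> real \<Rightarrow> 4 \<Rightarrow> complex \<Rightarrow> complex" where
  "bracket P al k z = 1 + coeff_osc al * (1 - z) + (1 - z)^2 * poly (P k) z"

definition amp_pos :: "(4 \<Rightarrow> complex poly) \<Rightarrow> real \<Rightarrow> 4 \<Rightarrow> complex \<Rightarrow> complex" where
  "amp_pos P al k z = (1 - z) * bracket P al k z"

definition amp_neg :: "(4 \<Rightarrow> complex poly) \<Rightarrow> 4 \<Rightarrow> complex \<Rightarrow> complex" where
  "amp_neg Q k z = (1 - z)^5 * poly (Q k) z"

definition fR_ext :: "(4 \<Rightarrow> complex poly) \<Rightarrow> (4 \<Rightarrow> complex poly) \<Rightarrow> real \<Rightarrow> 4 \<Rightarrow> complex \<Rightarrow> complex" where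
  "fR_ext P Q al k z =
    (if k = 1 then 1 + coeff_reg al * (1 - z) + (1 - z)^2 * poly (P 1) z
     else if k = 2 then \<i> + \<i> * coeff_reg al * (1 - z) + (1 - z)^2 * poly (P 2) z
     else (if k = 3 then 1 else \<i>) * (osc_pos al z * amp_pos P al k z + osc_neg al z * amp_neg Q k z))"

definition gL_ext :: "(4 \<Rightarrow> complex poly) \<Rightarrow> 4 \<Rightarrow> complex \<Rightarrow> complex" where
  "gL_ext PL k z =
    (if k = 1 then 1 + (1 + z) * poly (PL 1) z
     else if k = 2 then \<i> + (1 + z) * poly (PL 2) z
     else if k = 3 then 1 / (1 + z) * (1 + (1 + z) * poly (PL 3) z)
     else \<i> / (1 + z) * (1 + (1 + z) * poly (PL 4) z))"

definition gLM_ext :: "(4 \<Rightarrow> complex poly) \<Rightarrow> real^4^4 \<Rightarrow> 4 \<Rightarrow> complex \<Rightarrow> complex" where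
  "gLM_ext PL M k z = (\<Sum>j\<in>UNIV. of_real (M$j$k) * gL_ext PL j z)"

lemma phi_ext_of_real: "y < 1 \<Longrightarrow> phi_ext al (of_real y) = of_real (phi y al)"
  by (simp add: phi_def phi_ext_def Ln_of_real[symmetric])

lemma fR_ext_of_real: "y < 1 \<Longrightarrow> fR_ext P Q al k (of_real y) = fR P Q al k y"
  using exhaust_4[of k]
  by (elim disjE; simp add: fR_def fR_ext_def Let_def phi_ext_of_real osc_pos_def osc_neg_def amp_pos_def
      amp_neg_def bracket_def coeff_reg_def coeff_osc_def; simp add: algebra_simps)

lemma gL_ext_of_real: "gL_ext PL k (of_real y) = gL PL k y"
  by (simp add: gL_def gL_ext_def Let_def)

lemma has_field_derivative_phi_ext:
  assumes z: "Re z < 1" and al: "al \<noteq> 0"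
  shows "(phi_ext al has_field_derivative phi_ext' al z) (at z)"
proof -
  have nz: "1 - z \<noteq> 0" and "z \<noteq> 1" using z by auto
  have "1 - z \<notin> \<real>\<^sub>\<le>\<^sub>0" using z by (auto simp: nonpos_Reals_def dest!: arg_cong[where f = Re])
  have normalize: "\<And>w::complex. w \<noteq> 0 \<Longrightarrow>
     (0 * w\<^sup>2 + 2 * complex_of_real al * (2 * ((0 - 1) * w))) / w ^ 4 +
     (0 * w - 2 * complex_of_real al * (0 - 1)) / (w * w) -
     (0 * Ln w + inverse w * (0 - 1) * 2 / complex_of_real al) =
     2 * complex_of_real al / w\<^sup>2 - 4 * complex_of_real al / w ^ 3 + 2 / (complex_of_real al * w)"
    using al by (simp add: field_simps eval_nat_numeral)
  show ?thesis
    unfolding phi_ext_def phi_ext'_def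
    apply (intro derivative_eq_intros)
    apply (simp_all add: \<open>z \<noteq> 1\<close> \<open>1 - z \<notin> \<real>\<^sub>\<le>\<^sub>0\<close>)
    apply (rule normalize[OF nz])
    done
qed

lemma has_field_derivative_osc_pos:
  "Re z < 1 \<Longrightarrow> al \<noteq> 0 \<Longrightarrow> (osc_pos al has_field_derivative \<i> * phi_ext' al z * osc_pos al z) (at z)"
  unfolding osc_pos_def by (auto intro!: derivative_eq_intros has_field_derivative_phi_ext)

lemma has_field_derivative_osc_neg:
  "Re z < 1 \<Longrightarrow> al \<noteq> 0 \<Longrightarrow> (osc_neg al has_field_derivative - \<i> * phi_ext' al z * osc_neg al z) (at z)"
  unfolding osc_neg_def by (auto intro!: derivative_eq_intros has_field_derivative_phi_ext)

lemma holomorphic_amp [holomorphic_intros]: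
  "amp_pos P al k holomorphic_on S" "amp_neg Q k holomorphic_on S"
  unfolding amp_pos_def amp_neg_def bracket_def by (intro holomorphic_intros)+

lemma holomorphic_fR_ext_regular: "k \<in> {1, 2} \<Longrightarrow> fR_ext P Q al k holomorphic_on S"
  unfolding fR_ext_def by (elim insertE) (simp_all, (intro holomorphic_intros)+)

lemma holomorphic_fR_ext:
  assumes "al \<noteq> 0"
  shows "fR_ext P Q al k holomorphic_on {z. Re z < 1}"
proof -
  have "osc_pos al holomorphic_on {z. Re z < 1}" "osc_neg al holomorphic_on {z. Re z < 1}"
    using has_field_derivative_osc_pos has_field_derivative_osc_neg assms
    by (subst holomorphic_on_open[OF open_halfspace_Re_lt]; blast)+
  thus ?thesis
    using exhaust_4[of k] unfolding fR_ext_def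
    by (elim disjE) (simp_all, (intro holomorphic_intros; simp)+)
qed

lemma holomorphic_gL_ext: "gL_ext PL k holomorphic_on {z. Re z > -1}"
proof -
  have "1 + z \<noteq> 0" if "Re z > -1" for z :: complex using that by (auto simp: complex_eq_iff)
  thus ?thesis
    using exhaust_4[of k] unfolding gL_ext_def
    by (elim disjE) (simp_all, (intro holomorphic_intros; simp)+)
qed

lemma holomorphic_gLM_ext: "gLM_ext PL M k holomorphic_on {z. Re z > -1}"
  unfolding gLM_ext_def by (intro holomorphic_intros holomorphic_gL_ext)

lemma deriv_fR_ext_oscillating:
  assumes "Re z < 1" "al \<noteq> 0" "k \<notin> {1, 2}"
  shows "deriv (fR_ext P Q al k) z = (if k = 3 then 1 else \<i>) *
    (osc_pos al z * (\<i> * phi_ext' al z * amp_pos P al k z + deriv (amp_pos P al k) z)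
     + osc_neg al z * (- \<i> * phi_ext' al z * amp_neg Q k z + deriv (amp_neg Q k) z))"
proof -
  have "fR_ext P Q al k = (\<lambda>z. (if k = 3 then 1 else \<i>) *
      (osc_pos al z * amp_pos P al k z + osc_neg al z * amp_neg Q k z))"
    using assms(3) by (auto simp: fR_ext_def fun_eq_iff)
  moreover have "((\<lambda>z. (if k = 3 then 1 else \<i>) *
      (osc_pos al z * amp_pos P al k z + osc_neg al z * amp_neg Q k z)) has_field_derivative
      (if k = 3 then 1 else \<i>) *
      (osc_pos al z * (\<i> * phi_ext' al z * amp_pos P al k z + deriv (amp_pos P al k) z)
       + osc_neg al z * (- \<i> * phi_ext' al z * amp_neg Q k z + deriv (amp_neg Q k) z))) (at z)"
    by (rule derivative_eq_intros has_field_derivative_osc_pos[OF assms(1,2)]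
        has_field_derivative_osc_neg[OF assms(1,2)]
        holomorphic_derivI[OF holomorphic_amp(1) open_UNIV UNIV_I]
        holomorphic_derivI[OF holomorphic_amp(2) open_UNIV UNIV_I] refl)+
       (simp add: algebra_simps)
  ultimately show ?thesis by (simp add: DERIV_imp_deriv)
qed

lemma FR_entries:
  assumes y: "y < 1" and al: "astar + a \<noteq> 0"
  shows "FR P Q astar y a $ 1 $ k = Re (fR_ext P Q (astar + a) k (of_real y))"
    and "FR P Q astar y a $ 2 $ k = Im (fR_ext P Q (astar + a) k (of_real y))"
    and "FR P Q astar y a $ 3 $ k = Re (deriv (fR_ext P Q (astar + a) k) (of_real y))"
    and "FR P Q astar y a $ 4 $ k = Im (deriv (fR_ext P Q (astar + a) k) (of_real y))"
proof -
  have "vector_derivative (fR P Q (astar + a) k) (at y) = deriv (fR_ext P Q (astar + a) k) (of_real y)"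
    using y by (intro vector_derivative_at has_vector_derivative_holomorphic_of_real[where T = "{..<1}",
        OF holomorphic_fR_ext[OF al]]) (auto simp: open_halfspace_Re_lt fR_ext_of_real)
  thus "FR P Q astar y a $ 1 $ k = Re (fR_ext P Q (astar + a) k (of_real y))"
    and "FR P Q astar y a $ 2 $ k = Im (fR_ext P Q (astar + a) k (of_real y))"
    and "FR P Q astar y a $ 3 $ k = Re (deriv (fR_ext P Q (astar + a) k) (of_real y))"
    and "FR P Q astar y a $ 4 $ k = Im (deriv (fR_ext P Q (astar + a) k) (of_real y))"
    using y by (simp_all add: FR_def colvec_def fR_ext_of_real)
qed

lemma FL_entries:
  assumes y: "y > -1"
  shows "FL PL y $ 1 $ k = Re (gL_ext PL k (of_real y))"
    and "FL PL y $ 2 $ k = Im (gL_ext PL k (of_real y))"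
    and "FL PL y $ 3 $ k = Re (deriv (gL_ext PL k) (of_real y))"
    and "FL PL y $ 4 $ k = Im (deriv (gL_ext PL k) (of_real y))"
proof -
  have "vector_derivative (gL PL k) (at y) = deriv (gL_ext PL k) (of_real y)"
    using y by (intro vector_derivative_at has_vector_derivative_holomorphic_of_real[where T = UNIV,
        OF holomorphic_gL_ext]) (auto simp: open_halfspace_Re_gt gL_ext_of_real)
  thus "FL PL y $ 1 $ k = Re (gL_ext PL k (of_real y))"
    and "FL PL y $ 2 $ k = Im (gL_ext PL k (of_real y))"
    and "FL PL y $ 3 $ k = Re (deriv (gL_ext PL k) (of_real y))"
    and "FL PL y $ 4 $ k = Im (deriv (gL_ext PL k) (of_real y))"
    by (simp_all add: FL_def colvec_def gL_ext_of_real)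
qed

lemma deriv_gLM_ext:
  assumes "Re z > -1"
  shows "deriv (gLM_ext PL M k) z = (\<Sum>j\<in>UNIV. of_real (M$j$k) * deriv (gL_ext PL j) z)"
proof -
  have "(gLM_ext PL M k has_field_derivative (\<Sum>j\<in>UNIV. of_real (M$j$k) * deriv (gL_ext PL j) z)) (at z)"
    unfolding gLM_ext_def using assms
    by (intro DERIV_sum DERIV_cmult holomorphic_derivI[OF holomorphic_gL_ext])
       (auto simp: open_halfspace_Re_gt)
  thus ?thesis by (rule DERIV_imp_deriv)
qed

lemma FL_mult_entries:
  assumes y: "y > -1"
  shows "(FL PL y ** M) $ 1 $ k = Re (gLM_ext PL M k (of_real y))"
    and "(FL PL y ** M) $ 2 $ k = Im (gLM_ext PL M k (of_real y))"
    and "(FL PL y ** M) $ 3 $ k = Re (deriv (gLM_ext PL M k) (of_real y))"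
    and "(FL PL y ** M) $ 4 $ k = Im (deriv (gLM_ext PL M k) (of_real y))"
  using y by (simp_all add: matrix_matrix_mult_def FL_entries gLM_ext_def deriv_gLM_ext
      Re_sum Im_sum mult.commute)

lemma admissible_F_facts:
  assumes "admissible_F astar J PL P Q" "a \<in> J"
  shows "astar + a \<noteq> 0"
    and "\<And>y. y \<in> {0..<1} \<Longrightarrow> det (FR P Q astar y a) \<noteq> 0"
    and "\<And>y. y \<in> {-1<..0} \<Longrightarrow> det (FL PL y) \<noteq> 0"
    and "FL PL 0 ** MF PL P Q astar a = FR P Q astar 0 a"
    and "det (MF PL P Q astar a) \<noteq> 0"
proof -
  show "astar + a \<noteq> 0" "\<And>y. y \<in> {0..<1} \<Longrightarrow> det (FR P Q astar y a) \<noteq> 0"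
    and FL: "\<And>y. y \<in> {-1<..0} \<Longrightarrow> det (FL PL y) \<noteq> 0"
    using assms unfolding admissible_F_def by (auto simp: add_eq_0_iff2 add.commute)
  have d0: "det (FL PL 0) \<noteq> 0" using FL by auto
  show FLM: "FL PL 0 ** MF PL P Q astar a = FR P Q astar 0 a"
    unfolding MF_def by (simp add: matrix_mul_assoc matrix_inv_right[OF d0])
  have "det (FR P Q astar 0 a) \<noteq> 0" using assms unfolding admissible_F_def by auto
  thus "det (MF PL P Q astar a) \<noteq> 0"
    using det_mul[of "FL PL 0" "MF PL P Q astar a"] by (simp add: FLM)
qed

lemma fundamental_system_Ffund:
  assumes "admissible_F astar J PL P Q" "a \<in> J"
  defines "G \<equiv> \<lambda>k. gLM_ext PL (MF PL P Q astar a) k" and "H \<equiv> \<lambda>k. fR_ext P Q (astar + a) k"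
  shows "fundamental_system (\<lambda>y. Ffund PL P Q astar y a) (\<lambda>k. glue (G k) (H k))
    (\<lambda>k. glue (deriv (G k)) (deriv (H k))) (\<lambda>k. glue (deriv (deriv (G k))) (deriv (deriv (H k))))"
proof (rule fundamental_system_glue)
  note adm = admissible_F_facts[OF assms(1,2)]
  fix k
  show "G k holomorphic_on {z. Re z > -1}" unfolding G_def by (rule holomorphic_gLM_ext)
  show "H k holomorphic_on {z. Re z < 1}" unfolding H_def by (rule holomorphic_fR_ext[OF adm(1)])
  show "G k 0 = H k 0" and "deriv (G k) 0 = deriv (H k) 0"
    using adm(4) FL_mult_entries[of 0 PL "MF PL P Q astar a" k] FR_entries[of 0 astar a P Q k] adm(1)
    by (auto simp: G_def H_def complex_eq_iff dest!: arg_cong[where f = "\<lambda>X. X $ _ $ k"])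
  fix y :: real
  assume y: "y \<in> {-1<..<1}"
  show "det (Ffund PL P Q astar y a) \<noteq> 0"
    using y adm(2,3,5) by (auto simp: Ffund_def det_mul)
  show "Ffund PL P Q astar y a $1$k = Re (glue (G k) (H k) y) \<and>
    Ffund PL P Q astar y a $2$k = Im (glue (G k) (H k) y) \<and>
    Ffund PL P Q astar y a $3$k = Re (glue (deriv (G k)) (deriv (H k)) y) \<and>
    Ffund PL P Q astar y a $4$k = Im (glue (deriv (G k)) (deriv (H k)) y)"
    using y adm(1) by (simp add: Ffund_def glue_def G_def H_def FL_mult_entries FR_entries)
qed

section \<open>The inverse near \<open>y = -1\<close>\<close>

lemma deriv_gL_ext_regular:
  assumes "k \<in> {1, 2}"
  shows "deriv (gL_ext PL k) z = poly (PL k) z + (1 + z) * poly (pderiv (PL k)) z"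
proof -
  have "gL_ext PL k = (\<lambda>z. (if k = 1 then 1 else \<i>) + (1 + z) * poly (PL k) z)"
    using assms by (auto simp: gL_ext_def fun_eq_iff)
  moreover have "((\<lambda>z. (if k = 1 then 1 else \<i>) + (1 + z) * poly (PL k) z) has_field_derivative
      poly (PL k) z + (1 + z) * poly (pderiv (PL k)) z) (at z)"
    by (auto intro!: derivative_eq_intros simp: algebra_simps)
  ultimately show ?thesis by (simp add: DERIV_imp_deriv)
qed

lemma deriv_gL_ext_singular:
  assumes k: "k \<in> {3, 4}" and z: "1 + z \<noteq> 0"
  shows "deriv (gL_ext PL k) z = (if k = 3 then 1 else \<i>) * (poly (pderiv (PL k)) z - inverse ((1 + z)^2))"
proof -
  let ?c = "if k = 3 then 1 else \<i>"
  have "((\<lambda>w. ?c * (inverse (1 + w) + poly (PL k) w)) has_field_derivative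
      ?c * (poly (pderiv (PL k)) z - inverse ((1 + z)^2))) (at z)"
    using z by (auto intro!: derivative_eq_intros simp: power2_eq_square inverse_mult_distrib)
  hence "(gL_ext PL k has_field_derivative ?c * (poly (pderiv (PL k)) z - inverse ((1 + z)^2))) (at z)"
  proof (rule has_field_derivative_transform_within_open[where S = "{w. 1 + w \<noteq> 0}"])
    have "open ((\<lambda>w. 1 + w) -` (- {0::complex}))"
      by (intro open_vimage continuous_intros)
    thus "open {w::complex. 1 + w \<noteq> 0}" by (simp add: vimage_def)
  next
    have "1 / u * (1 + u * X) = inverse u + X" "\<i> / u * (1 + u * X) = \<i> * (inverse u + X)"
      if "u \<noteq> 0" for u X :: complex
      using that by (simp_all add: field_simps)
    thus "?c * (inverse (1 + w) + poly (PL k) w) = gL_ext PL k w" if "w \<in> {w. 1 + w \<noteq> 0}" for w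
      using k that by (auto simp: gL_ext_def)
  qed (use z in auto)
  thus ?thesis by (rule DERIV_imp_deriv)
qed

text \<open>Near \<open>y = -1\<close> the columns \<open>g\<^sub>3, g\<^sub>4\<close> blow up like \<open>1/(1+y)\<close>; scaling the last two rows and
  columns of \<open>FL\<close> by \<open>1 + y\<close> gives a matrix that is polynomial in \<open>y\<close> and invertible at \<open>-1\<close>.\<close>

definition left_scale :: "real \<Rightarrow> 4 \<Rightarrow> real" where
  "left_scale y i = (if i = 1 \<or> i = 2 then 1 else 1 + y)"

definition gL_scaled :: "(4 \<Rightarrow> complex poly) \<Rightarrow> 4 \<Rightarrow> real \<Rightarrow> complex" where
  "gL_scaled PL j y = (let z = complex_of_real y in
     if j = 1 \<or> j = 2 then (if j = 1 then 1 else \<i>) + (1 + z) * poly (PL j) z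
     else (if j = 3 then 1 else \<i>) * (1 + (1 + z) * poly (PL j) z))"

definition gL_scaled_deriv :: "(4 \<Rightarrow> complex poly) \<Rightarrow> 4 \<Rightarrow> real \<Rightarrow> complex" where
  "gL_scaled_deriv PL j y = (let z = complex_of_real y in
     if j = 1 \<or> j = 2 then (1 + z) * (poly (PL j) z + (1 + z) * poly (pderiv (PL j)) z)
     else (if j = 3 then 1 else \<i>) * (- 1 + (1 + z)^2 * poly (pderiv (PL j)) z))"

definition FL_scaled :: "(4 \<Rightarrow> complex poly) \<Rightarrow> real \<Rightarrow> real^4^4" where
  "FL_scaled PL y = (\<chi> i j. if i = 1 then Re (gL_scaled PL j y) else if i = 2 then Im (gL_scaled PL j y)
                          else if i = 3 then Re (gL_scaled_deriv PL j y) else Im (gL_scaled_deriv PL j y))"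

lemma gL_scaled_eq:
  assumes "y > -1"
  shows "gL_scaled PL j y = of_real (left_scale y j) * gL_ext PL j (of_real y)"
    and "gL_scaled_deriv PL j y = (1 + of_real y) * of_real (left_scale y j) * deriv (gL_ext PL j) (of_real y)"
proof -
  define w where "w = 1 + complex_of_real y"
  have w: "w \<noteq> 0" "complex_of_real y = w - 1" using assms by (auto simp: w_def complex_eq_iff)
  show "gL_scaled PL j y = of_real (left_scale y j) * gL_ext PL j (of_real y)"
    and "gL_scaled_deriv PL j y = (1 + of_real y) * of_real (left_scale y j) * deriv (gL_ext PL j) (of_real y)"
    using exhaust_4[of j]
    by (elim disjE, simp_all add: gL_scaled_def gL_scaled_deriv_def left_scale_def gL_ext_def Let_def
        deriv_gL_ext_regular deriv_gL_ext_singular w field_simps power2_eq_square)+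
qed

lemma FL_scaled_eq:
  assumes "y > -1"
  shows "FL_scaled PL y = diag_matrix (left_scale y) ** FL PL y ** diag_matrix (left_scale y)"
proof -
  have "FL_scaled PL y $ i $ j = left_scale y i * FL PL y $ i $ j * left_scale y j" for i j
    using exhaust_4[of i] assms
    by (elim disjE) (simp_all add: FL_scaled_def gL_scaled_eq FL_entries left_scale_def)
  thus ?thesis
    by (simp add: vec_eq_iff matrix_mult_diag_entry diag_mult_matrix_entry)
qed

lemma continuous_FL_scaled: "continuous_on UNIV (\<lambda>y. FL_scaled PL y $ i $ j)"
proof -
  have "continuous_on UNIV (gL_scaled PL j)" "continuous_on UNIV (gL_scaled_deriv PL j)"
    unfolding gL_scaled_def[abs_def] gL_scaled_deriv_def[abs_def] Let_def
    by (cases "j = 1 \<or> j = 2"; auto intro!: continuous_intros)+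
  thus ?thesis
    using exhaust_4[of i] by (elim disjE) (simp_all add: FL_scaled_def continuous_intros)
qed

lemma FL_scaled_involution_at_minus_1: "FL_scaled PL (-1) ** FL_scaled PL (-1) = mat 1"
proof -
  have "(FL_scaled PL (-1) ** FL_scaled PL (-1)) $ i $ j = mat 1 $ i $ j" for i j
    using exhaust_4[of i] exhaust_4[of j]
    by (elim disjE)
       (simp_all add: matrix_mult_entry_4 FL_scaled_def gL_scaled_def gL_scaled_deriv_def mat_def)
  thus ?thesis by (simp add: vec_eq_iff)
qed

lemma matrix_inv_FL_mult_eq:
  fixes M :: "real^4^4"
  assumes "y > -1" and "det M \<noteq> 0" and "det (FL_scaled PL y) \<noteq> 0"
  shows "matrix_inv (FL PL y ** M)
    = matrix_inv M ** diag_matrix (left_scale y) ** matrix_inv (FL_scaled PL y) ** diag_matrix (left_scale y)"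
proof -
  have "M ** (matrix_inv M ** diag_matrix (left_scale y)) = diag_matrix (left_scale y)"
    by (simp add: matrix_mul_assoc matrix_inv_right[OF assms(2)])
  hence "FL_scaled PL y = diag_matrix (left_scale y) ** (FL PL y ** M) ** (matrix_inv M ** diag_matrix (left_scale y))"
    using assms(1) by (simp add: FL_scaled_eq matrix_mul_assoc[symmetric])
  thus ?thesis using assms(3) by (simp add: matrix_inv_factor matrix_mul_assoc)
qed

lemma row_sum_mult_left_scale_le:
  assumes "x \<in> {-1<..0}"
  shows "(\<Sum>m\<in>UNIV. \<bar>(A ** diag_matrix (left_scale x)) $ k $ m\<bar>) \<le> (\<Sum>k\<in>UNIV. \<Sum>m\<in>UNIV. \<bar>A $ k $ m\<bar>)"
proof -
  have "(\<Sum>m\<in>UNIV. \<bar>(A ** diag_matrix (left_scale x)) $ k $ m\<bar>) \<le> (\<Sum>m\<in>UNIV. \<bar>A $ k $ m\<bar>)"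
    using assms by (intro sum_mono) (auto simp: matrix_mult_diag_entry left_scale_def abs_mult
        intro: mult_left_le)
  also have "\<dots> \<le> (\<Sum>k\<in>UNIV. \<Sum>m\<in>UNIV. \<bar>A $ k $ m\<bar>)"
    by (rule member_le_sum[where f = "\<lambda>k. \<Sum>m\<in>UNIV. \<bar>A $ k $ m\<bar>"]) (auto intro: sum_nonneg)
  finally show ?thesis .
qed

lemma eventually_matrix_inv_FL_mult_bound:
  fixes M :: "real^4^4"
  assumes "det M \<noteq> 0"
  shows "\<exists>C. eventually (\<lambda>x. \<forall>k. \<forall>j\<in>{3, 4}. \<bar>matrix_inv (FL PL x ** M) $ k $ j\<bar> \<le> C * (1 + x))
    (at_right (-1))"
proof -
  have "((\<lambda>y. FL_scaled PL y $ i $ j) \<longlongrightarrow> FL_scaled PL (-1) $ i $ j) (at_right (-1))" for i j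
    using continuous_FL_scaled[of PL i j] unfolding continuous_on_def
    by (auto intro: tendsto_within_subset)
  then obtain B where B: "eventually (\<lambda>x. det (FL_scaled PL x) \<noteq> 0 \<and>
      (\<forall>k j. \<bar>matrix_inv (FL_scaled PL x) $ k $ j\<bar> \<le> B)) (at_right (-1))"
    using eventually_bounded_matrix_inv
      det_nonzero_if_right_inverse[OF FL_scaled_involution_at_minus_1] by blast
  define S where "S = (\<Sum>k\<in>UNIV. \<Sum>m\<in>UNIV. \<bar>matrix_inv M $ k $ m\<bar>)"
  from B eventually_at_right_real[of "-1" "0::real", simplified]
  have "eventually (\<lambda>x. \<forall>k. \<forall>j\<in>{3, 4}. \<bar>matrix_inv (FL PL x ** M) $ k $ j\<bar> \<le> S * B * (1 + x))
    (at_right (-1))"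
  proof eventually_elim
    case (elim x)
    have "\<bar>matrix_inv (FL PL x ** M) $ k $ j\<bar> \<le> S * B * (1 + x)" if "j \<in> {3, 4}" for k j
    proof -
      have "\<bar>matrix_inv (FL PL x ** M) $ k $ j\<bar>
          \<le> (\<Sum>m\<in>UNIV. \<bar>(matrix_inv M ** diag_matrix (left_scale x)) $ k $ m\<bar>) * B * \<bar>left_scale x j\<bar>"
        using elim assms by (auto simp: matrix_inv_FL_mult_eq intro: abs_matrix_mult_diag_entry_le)
      also have "\<dots> \<le> S * B * (1 + x)"
      proof -
        have "0 \<le> B" using elim by (meson abs_ge_zero order_trans)
        moreover have "0 \<le> S" by (auto simp: S_def intro: sum_nonneg)
        ultimately show ?thesis
          using elim that row_sum_mult_left_scale_le[of x "matrix_inv M" k]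
          by (intro mult_mono) (auto simp: S_def left_scale_def)
      qed
      finally show ?thesis .
    qed
    thus ?case by blast
  qed
  thus ?thesis by blast
qed

section \<open>The inverse near \<open>y = 1\<close>\<close>

lemma norm_osc_of_real:
  assumes "y < 1"
  shows "norm (osc_pos al (of_real y)) = 1" and "norm (osc_neg al (of_real y)) = 1"
proof -
  have "osc_neg al (of_real y) = exp (\<i> * of_real (- phi y al))"
    using assms by (simp add: osc_neg_def phi_ext_of_real)
  thus "norm (osc_pos al (of_real y)) = 1" and "norm (osc_neg al (of_real y)) = 1"
    using assms by (simp_all only: osc_pos_def phi_ext_of_real norm_exp_i_times)
qed

definition osc_comb :: "(4 \<Rightarrow> complex poly) \<Rightarrow> (4 \<Rightarrow> complex poly) \<Rightarrow> real \<Rightarrow> complex \<Rightarrow> real \<Rightarrow> complex" where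
  "osc_comb P Q al w y = of_real (Re w) * fR_ext P Q al 3 (of_real y) + of_real (Im w) * fR_ext P Q al 4 (of_real y)"

definition osc_comb_deriv :: "(4 \<Rightarrow> complex poly) \<Rightarrow> (4 \<Rightarrow> complex poly) \<Rightarrow> real \<Rightarrow> complex \<Rightarrow> real \<Rightarrow> complex" where
  "osc_comb_deriv P Q al w y =
     of_real (Re w) * deriv (fR_ext P Q al 3) (of_real y) + of_real (Im w) * deriv (fR_ext P Q al 4) (of_real y)"

text \<open>With \<open>s = 1 - z\<close> and \<open>A\<^sub>k = bracket P al k z\<close>, these rewrite the combination
  \<open>a f\<^sub>3 + b f\<^sub>4\<close> of the oscillating columns (and its derivative), for \<open>(a + \<i> b) e\<^sup>i\<^sup>\<phi> = k\<close>, as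
  \<open>k\<close> times a convergent term plus bounded multiples of null terms.\<close>

lemma osc_comb_split:
  fixes E E' A3 A4 q3 q4 s k :: complex and a b :: real
  assumes s: "s \<noteq> 0" and k: "(of_real a + \<i> * of_real b) * E = k"
  shows "(of_real a * (E * (s * A3) + E' * (s^5 * q3)) + of_real b * (\<i> * (E * (s * A4) + E' * (s^5 * q4)))) / s
       = k * A3 + (of_real b * E) * (\<i> * (A4 - A3)) + (of_real a * E') * (s^4 * q3) + (of_real b * E') * (\<i> * (s^4 * q4))"
proof -
  have "of_real a * (E * (s * A3) + E' * (s^5 * q3)) + of_real b * (\<i> * (E * (s * A4) + E' * (s^5 * q4)))
      = s * (((of_real a + \<i> * of_real b) * E) * A3 + (of_real b * E) * (\<i> * (A4 - A3))
             + (of_real a * E') * (s^4 * q3) + (of_real b * E') * (\<i> * (s^4 * q4)))"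
    by (simp add: algebra_simps eval_nat_numeral)
  thus ?thesis using s k by simp
qed

lemma osc_comb_deriv_split:
  fixes E E' A3 A4 q3 q4 s k ph Ph dS3 dS4 dT3 dT4 :: complex and a b :: real
  assumes k: "(of_real a + \<i> * of_real b) * E = k" and Ph: "s^3 * ph = Ph"
  shows "s^2 * (of_real a * (E * (\<i> * ph * (s * A3) + dS3) + E' * (- \<i> * ph * (s^5 * q3) + dT3))
             + of_real b * (\<i> * (E * (\<i> * ph * (s * A4) + dS4) + E' * (- \<i> * ph * (s^5 * q4) + dT4))))
       = k * (\<i> * Ph * A3 + s^2 * dS3) + (of_real b * E) * (\<i> * (\<i> * Ph * (A4 - A3) + s^2 * (dS4 - dS3)))
         + (of_real a * E') * (- \<i> * Ph * (s^4 * q3) + s^2 * dT3)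
         + (of_real b * E') * (\<i> * (- \<i> * Ph * (s^4 * q4) + s^2 * dT4))"
proof -
  have "s^2 * (of_real a * (E * (\<i> * ph * (s * A3) + dS3) + E' * (- \<i> * ph * (s^5 * q3) + dT3))
             + of_real b * (\<i> * (E * (\<i> * ph * (s * A4) + dS4) + E' * (- \<i> * ph * (s^5 * q4) + dT4))))
       = ((of_real a + \<i> * of_real b) * E) * (\<i> * (s^3 * ph) * A3 + s^2 * dS3)
         + (of_real b * E) * (\<i> * (\<i> * (s^3 * ph) * (A4 - A3) + s^2 * (dS4 - dS3)))
         + (of_real a * E') * (- \<i> * (s^3 * ph) * (s^4 * q3) + s^2 * dT3)
         + (of_real b * E') * (\<i> * (- \<i> * (s^3 * ph) * (s^4 * q4) + s^2 * dT4))"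
    by (simp add: algebra_simps eval_nat_numeral)
  thus ?thesis unfolding k Ph .
qed

definition phi_ext'_scaled :: "real \<Rightarrow> complex \<Rightarrow> complex" where
  "phi_ext'_scaled al z = - 4 * of_real al + 2 * of_real al * (1 - z) + 2 * (1 - z)^2 / of_real al"

lemma phi_ext'_scaled_eq: "z \<noteq> 1 \<Longrightarrow> al \<noteq> 0 \<Longrightarrow> (1 - z)^3 * phi_ext' al z = phi_ext'_scaled al z"
proof -
  assume "z \<noteq> 1" "al \<noteq> 0"
  moreover have "w^3 * (- 4 * of_real al / w^3 + 2 * of_real al / w^2 + 2 / (of_real al * w))
      = - 4 * of_real al + 2 * of_real al * w + 2 * w^2 / of_real al" if "w \<noteq> 0" "al \<noteq> 0" for w :: complex
    using that by (simp add: field_simps eval_nat_numeral)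
  ultimately show ?thesis by (simp add: phi_ext'_def phi_ext'_scaled_def)
qed

lemma eventually_bounded_phase_factors:
  assumes "eventually (\<lambda>y. norm (w y) \<le> 1) (at_left 1)"
  shows "eventually (\<lambda>y. norm (of_real (Im (w y)) * osc_pos al (of_real y)) \<le> 1) (at_left 1)"
    and "eventually (\<lambda>y. norm (of_real (Re (w y)) * osc_neg al (of_real y)) \<le> 1) (at_left 1)"
    and "eventually (\<lambda>y. norm (of_real (Im (w y)) * osc_neg al (of_real y)) \<le> 1) (at_left 1)"
proof -
  have "eventually (\<lambda>y. y \<in> {0<..<1}) (at_left (1::real))" by (rule eventually_at_left_real) simp
  with assms have "eventually (\<lambda>y. norm (of_real (Im (w y)) * osc_pos al (of_real y)) \<le> 1 \<and>
      norm (of_real (Re (w y)) * osc_neg al (of_real y)) \<le> 1 \<and>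
      norm (of_real (Im (w y)) * osc_neg al (of_real y)) \<le> 1) (at_left 1)"
  proof eventually_elim
    case (elim y)
    have "\<bar>Re (w y)\<bar> \<le> 1" "\<bar>Im (w y)\<bar> \<le> 1"
      using elim abs_Re_le_cmod abs_Im_le_cmod order_trans by blast+
    thus ?case using elim by (simp add: norm_mult norm_osc_of_real)
  qed
  thus "eventually (\<lambda>y. norm (of_real (Im (w y)) * osc_pos al (of_real y)) \<le> 1) (at_left 1)"
    and "eventually (\<lambda>y. norm (of_real (Re (w y)) * osc_neg al (of_real y)) \<le> 1) (at_left 1)"
    and "eventually (\<lambda>y. norm (of_real (Im (w y)) * osc_neg al (of_real y)) \<le> 1) (at_left 1)"
    by (auto elim: eventually_mono)
qed

lemma continuous_on_amplitudes:
  shows "continuous_on UNIV (\<lambda>y. bracket P al k (of_real y))"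
    and "continuous_on UNIV (\<lambda>y. (1 - complex_of_real y)^4 * poly (Q k) (of_real y))"
    and "continuous_on UNIV (\<lambda>y. deriv (amp_pos P al k) (of_real y))"
    and "continuous_on UNIV (\<lambda>y. deriv (amp_neg Q k) (of_real y))"
    and "al \<noteq> 0 \<Longrightarrow> continuous_on UNIV (\<lambda>y. phi_ext'_scaled al (of_real y))"
proof -
  show "continuous_on UNIV (\<lambda>y. bracket P al k (of_real y))"
    "continuous_on UNIV (\<lambda>y. (1 - complex_of_real y)^4 * poly (Q k) (of_real y))"
    "al \<noteq> 0 \<Longrightarrow> continuous_on UNIV (\<lambda>y. phi_ext'_scaled al (of_real y))"
    unfolding bracket_def phi_ext'_scaled_def by (intro continuous_intros; simp)+
  show "continuous_on UNIV (\<lambda>y. deriv (amp_pos P al k) (of_real y))"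
    by (rule continuous_on_holomorphic_of_real[OF holomorphic_deriv[OF holomorphic_amp(1) open_UNIV]]) simp
  show "continuous_on UNIV (\<lambda>y. deriv (amp_neg Q k) (of_real y))"
    by (rule continuous_on_holomorphic_of_real[OF holomorphic_deriv[OF holomorphic_amp(2) open_UNIV]]) simp
qed

lemma tendsto_osc_comb:
  assumes al: "al \<noteq> 0"
    and w: "eventually (\<lambda>y. w y * osc_pos al (of_real y) = k \<and> norm (w y) \<le> 1) (at_left 1)"
  shows "((\<lambda>y. osc_comb P Q al (w y) y / of_real (1 - y)) \<longlongrightarrow> k) (at_left 1)"
proof -
  define A where "A k y = bracket P al k (of_real y)" for k y
  define q where "q k y = (1 - of_real y)^4 * poly (Q k) (of_real y)" for k y
  have X: "(A 3 \<longlongrightarrow> 1) (at_left 1)"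
    and Y: "((\<lambda>y. \<i> * (A 4 y - A 3 y)) \<longlongrightarrow> 0) (at_left 1)" "(q 3 \<longlongrightarrow> 0) (at_left 1)"
      "((\<lambda>y. \<i> * q 4 y) \<longlongrightarrow> 0) (at_left 1)"
    unfolding A_def[abs_def] q_def[abs_def]
    by (rule tendsto_within_if_continuous_on_UNIV, intro continuous_intros continuous_on_amplitudes,
        simp add: bracket_def)+
  have "eventually (\<lambda>y. norm (w y) \<le> 1) (at_left 1)" using w by (auto elim: eventually_mono)
  note e = eventually_bounded_phase_factors[OF this, of al]
  have "eventually (\<lambda>y. k * A 3 y + (of_real (Im (w y)) * osc_pos al (of_real y)) * (\<i> * (A 4 y - A 3 y))
      + (of_real (Re (w y)) * osc_neg al (of_real y)) * q 3 y
      + (of_real (Im (w y)) * osc_neg al (of_real y)) * (\<i> * q 4 y)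
      = osc_comb P Q al (w y) y / of_real (1 - y)) (at_left 1)"
    using w eventually_at_left_real[of 0 "1::real", simplified]
  proof eventually_elim
    case (elim y)
    have "(of_real (Re (w y)) + \<i> * of_real (Im (w y))) * osc_pos al (of_real y) = k"
      using elim by (simp add: complex_eq_iff)
    moreover have "1 - complex_of_real y \<noteq> 0" using elim by (simp add: complex_eq_iff)
    ultimately show ?case
      using osc_comb_split
      by (simp add: osc_comb_def fR_ext_def amp_pos_def amp_neg_def A_def q_def)
  qed
  from tendsto_principal_plus_bounded_null[OF X Y e this] show ?thesis by simp
qed

lemma tendsto_osc_comb_deriv:
  assumes al: "al \<noteq> 0"
    and w: "eventually (\<lambda>y. w y * osc_pos al (of_real y) = k \<and> norm (w y) \<le> 1) (at_left 1)"
  shows "((\<lambda>y. of_real ((1 - y)^2) * osc_comb_deriv P Q al (w y) y) \<longlongrightarrow> k * (- 4 * \<i> * of_real al))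
    (at_left 1)"
proof -
  define A where "A k y = bracket P al k (of_real y)" for k y
  define q where "q k y = (1 - of_real y)^4 * poly (Q k) (of_real y)" for k y
  define Ph where "Ph y = phi_ext'_scaled al (of_real y)" for y
  define dS where "dS k y = deriv (amp_pos P al k) (of_real y)" for k y
  define dT where "dT k y = deriv (amp_neg Q k) (of_real y)" for k y
  define s where "s y = 1 - complex_of_real y" for y
  have X: "((\<lambda>y. \<i> * Ph y * A 3 y + s y ^ 2 * dS 3 y) \<longlongrightarrow> - 4 * \<i> * of_real al) (at_left 1)"
    and Y: "((\<lambda>y. \<i> * (\<i> * Ph y * (A 4 y - A 3 y) + s y ^ 2 * (dS 4 y - dS 3 y))) \<longlongrightarrow> 0) (at_left 1)"
      "((\<lambda>y. - \<i> * Ph y * q 3 y + s y ^ 2 * dT 3 y) \<longlongrightarrow> 0) (at_left 1)"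
      "((\<lambda>y. \<i> * (- \<i> * Ph y * q 4 y + s y ^ 2 * dT 4 y)) \<longlongrightarrow> 0) (at_left 1)"
  proof -
    have "continuous_on UNIV (A k)" "continuous_on UNIV (q k)" "continuous_on UNIV Ph"
      "continuous_on UNIV (dS k)" "continuous_on UNIV (dT k)" "continuous_on UNIV s" for k
      unfolding A_def[abs_def] q_def[abs_def] Ph_def[abs_def] dS_def[abs_def] dT_def[abs_def] s_def[abs_def]
      by (simp_all add: continuous_on_amplitudes al continuous_intros)
    moreover have "A k 1 = 1" "q k 1 = 0" "Ph 1 = - 4 * of_real al" "s 1 = 0" for k
      by (simp_all add: A_def q_def Ph_def s_def bracket_def phi_ext'_scaled_def)
    ultimately show "((\<lambda>y. \<i> * Ph y * A 3 y + s y ^ 2 * dS 3 y) \<longlongrightarrow> - 4 * \<i> * of_real al) (at_left 1)"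
      "((\<lambda>y. \<i> * (\<i> * Ph y * (A 4 y - A 3 y) + s y ^ 2 * (dS 4 y - dS 3 y))) \<longlongrightarrow> 0) (at_left 1)"
      "((\<lambda>y. - \<i> * Ph y * q 3 y + s y ^ 2 * dT 3 y) \<longlongrightarrow> 0) (at_left 1)"
      "((\<lambda>y. \<i> * (- \<i> * Ph y * q 4 y + s y ^ 2 * dT 4 y)) \<longlongrightarrow> 0) (at_left 1)"
      by (auto intro!: tendsto_within_if_continuous_on_UNIV continuous_intros)
  qed
  have "eventually (\<lambda>y. norm (w y) \<le> 1) (at_left 1)" using w by (auto elim: eventually_mono)
  note e = eventually_bounded_phase_factors[OF this, of al]
  have "eventually (\<lambda>y. k * (\<i> * Ph y * A 3 y + s y ^ 2 * dS 3 y)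
      + (of_real (Im (w y)) * osc_pos al (of_real y)) * (\<i> * (\<i> * Ph y * (A 4 y - A 3 y) + s y ^ 2 * (dS 4 y - dS 3 y)))
      + (of_real (Re (w y)) * osc_neg al (of_real y)) * (- \<i> * Ph y * q 3 y + s y ^ 2 * dT 3 y)
      + (of_real (Im (w y)) * osc_neg al (of_real y)) * (\<i> * (- \<i> * Ph y * q 4 y + s y ^ 2 * dT 4 y))
      = of_real ((1 - y)^2) * osc_comb_deriv P Q al (w y) y) (at_left 1)"
    using w eventually_at_left_real[of 0 "1::real", simplified]
  proof eventually_elim
    case (elim y)
    have "(of_real (Re (w y)) + \<i> * of_real (Im (w y))) * osc_pos al (of_real y) = k"
      using elim by (simp add: complex_eq_iff)
    moreover have "s y ^ 3 * phi_ext' al (of_real y) = Ph y"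
      using elim al by (simp add: s_def Ph_def phi_ext'_scaled_eq complex_eq_iff)
    moreover have "Re (complex_of_real y) < 1" using elim by simp
    ultimately show ?case
      using osc_comb_deriv_split al
      by (simp add: osc_comb_deriv_def deriv_fR_ext_oscillating amp_pos_def amp_neg_def
          A_def q_def dS_def dT_def s_def)
  qed
  from tendsto_principal_plus_bounded_null[OF X Y e this] show ?thesis .
qed

definition phase_corr :: "real \<Rightarrow> 4 \<Rightarrow> real \<Rightarrow> complex" where
  "phase_corr al j y = (if j = 3 then \<i> else 1) * cnj (osc_pos al (of_real y))"

lemma phase_corr:
  assumes "y < 1"
  shows "phase_corr al j y * osc_pos al (of_real y) = (if j = 3 then \<i> else 1)"
    and "norm (phase_corr al j y) = 1"
proof -
  have "cnj (osc_pos al (of_real y)) * osc_pos al (of_real y) = 1"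
    using complex_norm_square[of "osc_pos al (of_real y)"] norm_osc_of_real(1)[OF assms]
    by (simp add: mult.commute)
  thus "phase_corr al j y * osc_pos al (of_real y) = (if j = 3 then \<i> else 1)"
    by (simp add: phase_corr_def)
  show "norm (phase_corr al j y) = 1"
    using norm_osc_of_real(1)[OF assms] by (simp add: phase_corr_def norm_mult)
qed

lemma eventually_phase_corr:
  "eventually (\<lambda>y. phase_corr al j y * osc_pos al (of_real y) = (if j = 3 then \<i> else 1) \<and>
     norm (phase_corr al j y) \<le> 1) (at_left 1)"
  using eventually_at_left_real[of 0 "1::real", simplified]
  by eventually_elim (simp add: phase_corr)

text \<open>Near \<open>y = 1\<close>, the oscillating columns of \<open>FR\<close> are recombined with the unimodular factors
  \<open>phase_corr\<close> (removing the phase \<open>e\<^sup>i\<^sup>\<phi>\<close>) and divided by \<open>1 - y\<close>, and the derivative rows are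
  multiplied by \<open>(1 - y)\<^sup>3\<close>; the resulting matrix has an invertible limit.\<close>

definition right_scale :: "real \<Rightarrow> 4 \<Rightarrow> real" where
  "right_scale y i = (if i = 1 \<or> i = 2 then 1 else (1 - y)^3)"

definition right_mix :: "real \<Rightarrow> real \<Rightarrow> real^4^4" where
  "right_mix al y = (\<chi> i j. if i = 1 \<and> j = 1 then 1 else if i = 2 \<and> j = 2 then 1
      else if (i = 3 \<or> i = 4) \<and> (j = 3 \<or> j = 4)
        then (if i = 3 then Re (phase_corr al j y) else Im (phase_corr al j y)) / (1 - y)
      else 0)"

definition FR_scaled_val :: "(4 \<Rightarrow> complex poly) \<Rightarrow> (4 \<Rightarrow> complex poly) \<Rightarrow> real \<Rightarrow> 4 \<Rightarrow> real \<Rightarrow> complex" where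
  "FR_scaled_val P Q al j y = (if j = 1 \<or> j = 2 then fR_ext P Q al j (of_real y)
     else osc_comb P Q al (phase_corr al j y) y / of_real (1 - y))"

definition FR_scaled_der :: "(4 \<Rightarrow> complex poly) \<Rightarrow> (4 \<Rightarrow> complex poly) \<Rightarrow> real \<Rightarrow> 4 \<Rightarrow> real \<Rightarrow> complex" where
  "FR_scaled_der P Q al j y = (if j = 1 \<or> j = 2 then of_real ((1 - y)^3) * deriv (fR_ext P Q al j) (of_real y)
     else of_real ((1 - y)^2) * osc_comb_deriv P Q al (phase_corr al j y) y)"

definition FR_scaled :: "(4 \<Rightarrow> complex poly) \<Rightarrow> (4 \<Rightarrow> complex poly) \<Rightarrow> real \<Rightarrow> real \<Rightarrow> real^4^4" where
  "FR_scaled P Q al y = (\<chi> i j. if i = 1 then Re (FR_scaled_val P Q al j y) else if i = 2 then Im (FR_scaled_val P Q al j y)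
      else if i = 3 then Re (FR_scaled_der P Q al j y) else Im (FR_scaled_der P Q al j y))"

definition FR_scaled_limit :: "real \<Rightarrow> real^4^4" where
  "FR_scaled_limit al = (\<chi> i j. if i = 1 then (if j = 1 \<or> j = 4 then 1 else 0)
      else if i = 2 then (if j = 2 \<or> j = 3 then 1 else 0)
      else if i = 3 then (if j = 3 then 4 * al else 0)
      else (if j = 4 then - 4 * al else 0))"

lemma FR_scaled_eq:
  assumes y: "y < 1" and al: "astar + a \<noteq> 0"
  shows "FR_scaled P Q (astar + a) y = diag_matrix (right_scale y) ** FR P Q astar y a ** right_mix (astar + a) y"
proof -
  have s: "1 - y \<noteq> 0" using y by simp
  have cube: "(1 - y)^3 * X / (1 - y) = (1 - y)^2 * X" for X
    using s by (simp add: power3_eq_cube power2_eq_square)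
  have "FR_scaled P Q (astar + a) y $ i $ j
      = (diag_matrix (right_scale y) ** FR P Q astar y a ** right_mix (astar + a) y) $ i $ j" for i j
    using exhaust_4[of i] exhaust_4[of j] s
    by (elim disjE; simp add: matrix_mult_entry_4 diag_matrix_def FR_scaled_def right_scale_def
        right_mix_def FR_entries[OF y al] FR_scaled_val_def FR_scaled_der_def osc_comb_def osc_comb_deriv_def;
        simp add: add_divide_distrib cube distrib_left mult.commute mult.left_commute)
  thus ?thesis by (simp add: vec_eq_iff)
qed

lemma tendsto_FR_scaled_val:
  assumes al: "al \<noteq> 0"
  shows "(FR_scaled_val P Q al j \<longlongrightarrow> (if j = 1 \<or> j = 4 then 1 else \<i>)) (at_left 1)"
proof (cases "j \<in> {1, 2}")
  case True
  have "((\<lambda>y. fR_ext P Q al j (of_real y)) \<longlongrightarrow> fR_ext P Q al j (of_real 1)) (at_left 1)"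
    by (intro tendsto_within_if_continuous_on_UNIV continuous_on_holomorphic_of_real[where S = UNIV]
        holomorphic_fR_ext_regular[OF True]) simp_all
  thus ?thesis using True by (auto simp: FR_scaled_val_def[abs_def] fR_ext_def)
next
  case False
  hence "j = 3 \<or> j = 4" using exhaust_4[of j] by auto
  thus ?thesis
    using tendsto_osc_comb[OF al eventually_phase_corr[of al j], where P = P and Q = Q] False
    by (auto simp: FR_scaled_val_def[abs_def])
qed

lemma tendsto_FR_scaled_der:
  assumes al: "al \<noteq> 0"
  shows "(FR_scaled_der P Q al j \<longlongrightarrow> (if j = 1 \<or> j = 2 then 0 else if j = 3 then 4 * of_real al else - 4 * \<i> * of_real al))
    (at_left 1)"
proof (cases "j \<in> {1, 2}")
  case True
  have "continuous_on UNIV (\<lambda>y. deriv (fR_ext P Q al j) (of_real y))"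
    by (intro continuous_on_holomorphic_of_real[OF holomorphic_deriv, where S = UNIV]
        holomorphic_fR_ext_regular[OF True]) simp_all
  hence "((\<lambda>y. of_real ((1 - y)^3) * deriv (fR_ext P Q al j) (of_real y)) \<longlongrightarrow> 0) (at_left 1)"
    by (intro tendsto_within_if_continuous_on_UNIV continuous_intros) simp_all
  thus ?thesis using True by (auto simp: FR_scaled_der_def[abs_def])
next
  case False
  hence "j = 3 \<or> j = 4" using exhaust_4[of j] by auto
  thus ?thesis
    using tendsto_osc_comb_deriv[OF al eventually_phase_corr[of al j], where P = P and Q = Q] False
    by (auto simp: FR_scaled_der_def[abs_def] algebra_simps)
qed

lemma tendsto_FR_scaled:
  assumes "al \<noteq> 0"
  shows "((\<lambda>y. FR_scaled P Q al y $ i $ j) \<longlongrightarrow> FR_scaled_limit al $ i $ j) (at_left 1)"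
  using exhaust_4[of i] exhaust_4[of j]
    tendsto_Re[OF tendsto_FR_scaled_val[OF assms, of P Q j]] tendsto_Im[OF tendsto_FR_scaled_val[OF assms, of P Q j]]
    tendsto_Re[OF tendsto_FR_scaled_der[OF assms, of P Q j]] tendsto_Im[OF tendsto_FR_scaled_der[OF assms, of P Q j]]
  by (elim disjE) (simp_all add: FR_scaled_def FR_scaled_limit_def)

lemma det_FR_scaled_limit:
  assumes "al \<noteq> 0"
  shows "det (FR_scaled_limit al) \<noteq> 0"
proof (rule det_nonzero_if_right_inverse)
  let ?L = "\<chi> i j. if i = 1 then (if j = 1 then 1 else if j = 4 then 1 / (4 * al) else 0)
                    else if i = 2 then (if j = 2 then 1 else if j = 3 then - 1 / (4 * al) else 0)
                    else if i = 3 then (if j = 3 then 1 / (4 * al) else 0)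
                    else (if j = 4 then - 1 / (4 * al) else 0)"
  have "(FR_scaled_limit al ** ?L) $ i $ j = mat 1 $ i $ j" for i j
    using exhaust_4[of i] exhaust_4[of j] assms
    by (elim disjE) (simp_all add: matrix_mult_entry_4 FR_scaled_limit_def mat_def)
  thus "FR_scaled_limit al ** ?L = mat 1" by (simp add: vec_eq_iff)
qed

lemma row_sum_right_mix_le:
  assumes "x < 1" and "k \<in> {3, 4}"
  shows "(\<Sum>m\<in>UNIV. \<bar>right_mix al x $ k $ m\<bar>) \<le> 2 / (1 - x)"
proof -
  have bnd: "\<bar>Re (phase_corr al m x)\<bar> \<le> 1" "\<bar>Im (phase_corr al m x)\<bar> \<le> 1" for m
    using abs_Re_le_cmod[of "phase_corr al m x"] abs_Im_le_cmod[of "phase_corr al m x"]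
      phase_corr(2)[OF assms(1)] by simp_all
  have "\<bar>Re (phase_corr al 3 x)\<bar> + \<bar>Re (phase_corr al 4 x)\<bar> \<le> 2"
    "\<bar>Im (phase_corr al 3 x)\<bar> + \<bar>Im (phase_corr al 4 x)\<bar> \<le> 2"
    using bnd[of 3] bnd[of 4] by linarith+
  thus ?thesis
    using assms
    by (auto simp: sum_4 right_mix_def add_divide_distrib[symmetric] intro!: divide_right_mono)
qed

lemma eventually_matrix_inv_FR_bound:
  assumes al: "astar + a \<noteq> 0"
  shows "\<exists>C. eventually (\<lambda>x. \<forall>k\<in>{3, 4}. \<forall>j\<in>{3, 4}. \<bar>matrix_inv (FR P Q astar x a) $ k $ j\<bar> \<le> C * (1 - x)^2)
    (at_left 1)"
proof -
  obtain B where B: "eventually (\<lambda>x. det (FR_scaled P Q (astar + a) x) \<noteq> 0 \<and>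
      (\<forall>k j. \<bar>matrix_inv (FR_scaled P Q (astar + a) x) $ k $ j\<bar> \<le> B)) (at_left 1)"
    using eventually_bounded_matrix_inv[OF tendsto_FR_scaled[OF al] det_FR_scaled_limit[OF al]] by blast
  from B eventually_at_left_real[of 0 "1::real", simplified]
  have "eventually (\<lambda>x. \<forall>k\<in>{3, 4}. \<forall>j\<in>{3, 4}. \<bar>matrix_inv (FR P Q astar x a) $ k $ j\<bar> \<le> 2 * B * (1 - x)^2)
    (at_left 1)"
  proof eventually_elim
    case (elim x)
    have "\<bar>matrix_inv (FR P Q astar x a) $ k $ j\<bar> \<le> 2 * B * (1 - x)^2" if "k \<in> {3, 4}" "j \<in> {3, 4}" for k j
    proof -
    have "matrix_inv (FR P Q astar x a)
        = right_mix (astar + a) x ** matrix_inv (FR_scaled P Q (astar + a) x) ** diag_matrix (right_scale x)"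
      using elim by (intro matrix_inv_factor) (auto simp: FR_scaled_eq al)
    hence "\<bar>matrix_inv (FR P Q astar x a) $ k $ j\<bar>
        \<le> (\<Sum>m\<in>UNIV. \<bar>right_mix (astar + a) x $ k $ m\<bar>) * B * \<bar>right_scale x j\<bar>"
      using elim by (auto intro: abs_matrix_mult_diag_entry_le)
    also have "\<dots> \<le> 2 / (1 - x) * B * (1 - x)^3"
    proof -
      have "0 \<le> B" using elim by (meson abs_ge_zero order_trans)
      moreover have "\<bar>right_scale x j\<bar> = (1 - x)^3" using elim that by (auto simp: right_scale_def)
      ultimately show ?thesis
        using elim that by (simp only:) (intro mult_right_mono row_sum_right_mix_le; simp)
    qed
    also have "\<dots> = 2 * B * (1 - x)^2"
      using elim by (simp add: field_simps power2_eq_square power3_eq_cube)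
    finally show ?thesis .
    qed
    thus ?case by blast
  qed
  thus ?thesis by blast
qed

lemma Yspace_weighted_bound:
  assumes "g \<in> Yspace"
  shows "\<exists>B. \<forall>y\<in>{-1<..<1}. norm (g y) * ((1 + y) * (1 - y)^2) \<le> B"
proof -
  obtain h where h: "continuous_on {-1..1} h"
    and hg: "\<And>y. y \<in> {-1<..<1} \<Longrightarrow> h y = complex_of_real ((1 + y) * (1 - y)^2) * g y"
    using assms unfolding Yspace_def by blast
  obtain B where B: "\<And>x. x \<in> {-1..1} \<Longrightarrow> norm (h x) \<le> B"
    using compact_imp_bounded[OF compact_continuous_image[OF h compact_Icc]]
    unfolding bounded_iff by blast
  have "norm (g y) * ((1 + y) * (1 - y)^2) \<le> B" if y: "y \<in> {-1<..<1}" for y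
  proof -
    have "(1 + y) * (1 - y)^2 \<ge> 0" using y by simp
    hence "norm (h y) = norm (g y) * ((1 + y) * (1 - y)^2)"
      using hg[OF y] by (simp only: norm_mult norm_of_real abs_of_nonneg mult.commute)
    thus ?thesis using B[of y] y by simp
  qed
  thus ?thesis by blast
qed

lemma abs_alphaF_le:
  "\<bar>alphaF F g k x\<bar> \<le> (\<bar>matrix_inv (F x) $ k $ 3\<bar> + \<bar>matrix_inv (F x) $ k $ 4\<bar>) * norm (g x)"
proof -
  have "\<bar>alphaF F g k x\<bar> \<le> \<bar>matrix_inv (F x) $ k $ 3\<bar> * \<bar>Re (g x)\<bar> + \<bar>matrix_inv (F x) $ k $ 4\<bar> * \<bar>Im (g x)\<bar>"
    unfolding alphaF_def by (rule order_trans[OF abs_triangle_ineq]) (simp add: abs_mult)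
  also have "\<dots> \<le> \<bar>matrix_inv (F x) $ k $ 3\<bar> * norm (g x) + \<bar>matrix_inv (F x) $ k $ 4\<bar> * norm (g x)"
    by (intro add_mono mult_left_mono abs_Re_le_cmod abs_Im_le_cmod) auto
  finally show ?thesis by (simp add: algebra_simps)
qed

lemma abs_alphaF_le_weighted:
  assumes "\<bar>matrix_inv (F x) $ k $ 3\<bar> \<le> C * r" and "\<bar>matrix_inv (F x) $ k $ 4\<bar> \<le> C * r"
    and "r > 0" and "r * norm (g x) \<le> B"
  shows "\<bar>alphaF F g k x\<bar> \<le> 2 * C * B"
proof -
  have "0 \<le> C * r" using assms(1) by (rule order_trans[OF abs_ge_zero])
  hence "0 \<le> C" using assms(3) by (simp add: zero_le_mult_iff)
  have "\<bar>alphaF F g k x\<bar> \<le> (C * r + C * r) * norm (g x)"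
    using abs_alphaF_le[of F g k x] add_mono[OF assms(1,2)]
    by (meson mult_right_mono norm_ge_zero order_trans)
  also have "\<dots> = 2 * C * (r * norm (g x))" by (simp add: algebra_simps)
  also have "\<dots> \<le> 2 * C * B" using assms(4) \<open>0 \<le> C\<close> by (intro mult_left_mono) auto
  finally show ?thesis .
qed

context
  fixes astar J PL P Q a g
  assumes adm: "admissible_F astar J PL P Q" and a: "a \<in> J" and g: "g \<in> Yspace"
begin

lemma continuous_alphaF_Ffund: "continuous_on {-1<..<1} (alphaF (\<lambda>y. Ffund PL P Q astar y a) g k)"
  using fundamental_system.continuous_alphaF[OF fundamental_system_Ffund[OF adm a]] g
  by (simp add: Yspace_def)

lemma integrable_alphaF_Ffund_left:
  assumes y: "y \<in> {-1<..<1}"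
  shows "alphaF (\<lambda>y. Ffund PL P Q astar y a) g k integrable_on {-1..y}"
proof -
  obtain B where B: "\<forall>y\<in>{-1<..<1}. norm (g y) * ((1 + y) * (1 - y)^2) \<le> B"
    using Yspace_weighted_bound[OF g] by blast
  obtain C where C: "eventually (\<lambda>x. \<forall>k. \<forall>j\<in>{3, 4}.
      \<bar>matrix_inv (FL PL x ** MF PL P Q astar a) $ k $ j\<bar> \<le> C * (1 + x)) (at_right (-1))"
    using eventually_matrix_inv_FL_mult_bound[OF admissible_F_facts(5)[OF adm a]] by blast
  from C eventually_at_right_real[of "-1" "0::real", simplified]
  have "eventually (\<lambda>x. \<bar>alphaF (\<lambda>y. Ffund PL P Q astar y a) g k x\<bar> \<le> 2 * C * B) (at_right (-1))"
  proof eventually_elim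
    case (elim x)
    have "(1 + x) * norm (g x) * 1 \<le> (1 + x) * norm (g x) * (1 - x)^2"
      using elim by (intro mult_left_mono one_le_power) auto
    also have "\<dots> \<le> B" using B elim by (auto simp: mult_ac)
    finally show ?case
      using elim by (intro abs_alphaF_le_weighted[where r = "1 + x"]) (auto simp: Ffund_def)
  qed
  thus ?thesis
    by (rule integrable_on_Icc_if_bounded_at_left_end[OF continuous_alphaF_Ffund _ y])
qed

lemma integrable_alphaF_Ffund_right:
  assumes y: "y \<in> {-1<..<1}" and k: "k \<in> {3, 4}"
  shows "alphaF (\<lambda>y. Ffund PL P Q astar y a) g k integrable_on {y..1}"
proof -
  obtain B where B: "\<forall>y\<in>{-1<..<1}. norm (g y) * ((1 + y) * (1 - y)^2) \<le> B"
    using Yspace_weighted_bound[OF g] by blast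
  obtain C where C: "eventually (\<lambda>x. \<forall>k\<in>{3, 4}. \<forall>j\<in>{3, 4}.
      \<bar>matrix_inv (FR P Q astar x a) $ k $ j\<bar> \<le> C * (1 - x)^2) (at_left 1)"
    using eventually_matrix_inv_FR_bound[OF admissible_F_facts(1)[OF adm a]] by blast
  from C eventually_at_left_real[of 0 "1::real", simplified]
  have "eventually (\<lambda>x. \<bar>alphaF (\<lambda>y. Ffund PL P Q astar y a) g k x\<bar> \<le> 2 * C * B) (at_left 1)"
  proof eventually_elim
    case (elim x)
    have "(1 - x)^2 * norm (g x) * 1 \<le> (1 - x)^2 * norm (g x) * (1 + x)"
      using elim by (intro mult_left_mono) auto
    also have "\<dots> \<le> B" using B elim by (auto simp: mult_ac)
    finally show ?case
      using elim k by (intro abs_alphaF_le_weighted[where r = "(1 - x)^2"]) (auto simp: Ffund_def)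
  qed
  thus ?thesis
    by (rule integrable_on_Icc_if_bounded_at_right_end[OF continuous_alphaF_Ffund _ y])
qed

end

theorem lemma3p27:
  fixes astar :: real and J :: "real set" and PL P Q :: "4 \<Rightarrow> complex poly"
    and g :: "real \<Rightarrow> complex" and a :: real
  assumes "admissible_F astar J PL P Q"
    and "g \<in> Yspace"
    and "a \<in> J"
  shows "C2_on (LFinv (\<lambda>y. Ffund PL P Q astar y a) (MF PL P Q astar a) g) ({-1<..<1} - {0})
       \<and> LFinv (\<lambda>y. Ffund PL P Q astar y a) (MF PL P Q astar a) g C1_differentiable_on {-1<..<1}
       \<and> (\<forall>y\<in>{-1<..<1} - {0}.
            LF (\<lambda>t. Ffund PL P Q astar t a)
               (LFinv (\<lambda>t. Ffund PL P Q astar t a) (MF PL P Q astar a) g) y = g y)"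
proof -
  have "variation_of_constants_axioms (\<lambda>y. Ffund PL P Q astar y a) g"
  proof
    show "continuous_on {-1<..<1} g" using assms(2) by (simp add: Yspace_def)
    show "alphaF (\<lambda>y. Ffund PL P Q astar y a) g k integrable_on {-1..y}" if "y \<in> {-1<..<1}" for y k
      by (rule integrable_alphaF_Ffund_left[OF assms(1,3,2) that])
    show "alphaF (\<lambda>y. Ffund PL P Q astar y a) g k integrable_on {y..1}"
      if "y \<in> {-1<..<1}" "k \<in> {3, 4}" for y k
      by (rule integrable_alphaF_Ffund_right[OF assms(1,3,2) that])
  qed
  with fundamental_system_Ffund[OF assms(1,3)] show ?thesis
    by (intro variation_of_constants.LFinv_solves variation_of_constants.intro)
qed

end
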